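(* Let $R$ be a commutative ring with $\operatorname{char}(R)=p>0$ and $A=R[\sigma]/(\sigma^n-1)$ with $n=mp$. If $p\ne2$, or $p=2$ and $m$ is even, then as graded algebras $$HH^*(A;A)\cong R[x,y,z]/(x^n-1,\,y^2).$$ If $p=2$ and $m$ is odd, then $$HH^*(A;A)\cong R[x,y,z]/(x^n-1,\,y^2-x^{n-2}z).$$ Here $x\in HH^0(A;A)$ is the class of $\sigma$, and $y\in HH^1(A;A)$, $z\in HH^2(A;A)$ are the classes of $1\in A$ under the identifications $HH^{2k+1}(A;A)=\operatorname{Ann}_A(n\sigma^{n-1})$ and $HH^{2k}(A;A)=A/(n\sigma^{n-1}A)$ ($k\ge1$); $|x|=0,|y|=1,|z|=2$.
   Context: The identifications come from the $2$-periodic $A^e$-projective resolution $\cdots\to A\otimes A\xrightarrow{d_2}A\otimes A\xrightarrow{d_1}A\otimes A\to A$, $d_{\text{odd}}$ = multiplication by $1\otimes\sigma-\sigma\otimes1$, $d_{\text{even}}$ = multiplication by $\sum_{i=0}^{n-1}\sigma^i\otimes\sigma^{n-i-1}$, whose $\operatorname{Hom}_{A^e}(-,A)$ complex is $A\xrightarrow{0}A\xrightarrow{n\sigma^{n-1}}A\xrightarrow{0}\cdots$. The product is the Hochschild cup product. *)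

theory Defs
  imports "HOL-Computational_Algebra.Polynomial" "HOL-Computational_Algebra.Primes"
begin

text \<open>Elements of A are represented by polynomials over R of degree < n
  (the normal forms modulo sigma^n - 1); red n reduces a polynomial
  modulo sigma^n - 1.\<close>

definition red :: "nat \<Rightarrow> 'a::comm_ring_1 poly \<Rightarrow> 'a poly" where
  "red n p = (\<Sum>i\<le>degree p. monom (coeff p i) (i mod n))"

definition Acar :: "nat \<Rightarrow> 'a::comm_ring_1 poly set" where
  "Acar n = {p. \<forall>i\<ge>n. coeff p i = 0}"

definition sig :: "nat \<Rightarrow> nat \<Rightarrow> 'a::comm_ring_1 poly" where
  "sig n i = monom 1 (i mod n)"

text \<open>Since A is R-free
  with basis sigma^0,...,sigma^(n-1), such a map is the same as its values on the
  basis tensors sigma^{i_1} \<otimes> ... \<otimes> sigma^{i_k}; we represent a k-cochain as a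
  function on index lists [i_1,...,i_k] (entries < n), extended by 0 elsewhere.\<close>

definition idx :: "nat \<Rightarrow> nat \<Rightarrow> nat list set" where
  "idx n k = {is. length is = k \<and> set is \<subseteq> {..<n}}"

definition cochains :: "nat \<Rightarrow> nat \<Rightarrow> (nat list \<Rightarrow> 'a::comm_ring_1 poly) set" where
  "cochains n k = {f. (\<forall>is. f is \<in> Acar n) \<and> (\<forall>is. is \<notin> idx n k \<longrightarrow> f is = 0)}"

text \<open>merge j is replaces the entries j-1 and j (0-based) by the index of their
  product sigma^{i_{j}} sigma^{i_{j+1}} = sigma^{(i_j + i_{j+1}) mod n}.\<close>
definition merge :: "nat \<Rightarrow> nat \<Rightarrow> nat list \<Rightarrow> nat list" where
  "merge n j is = take (j - 1) is @ [(is ! (j - 1) + is ! j) mod n] @ drop (j + 1) is"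

definition hoch_d :: "nat \<Rightarrow> nat \<Rightarrow> (nat list \<Rightarrow> 'a::comm_ring_1 poly) \<Rightarrow> nat list \<Rightarrow> 'a poly" where
  "hoch_d n k f is =
     (if is \<in> idx n (Suc k) then
        red n (sig n (hd is) * f (tl is))
        + (\<Sum>j\<in>{1..k}. (- 1) ^ j * f (merge n j is))
        + (- 1) ^ (Suc k) * red n (f (butlast is) * sig n (last is))
      else 0)"

definition cocycles :: "nat \<Rightarrow> nat \<Rightarrow> (nat list \<Rightarrow> 'a::comm_ring_1 poly) set" where
  "cocycles n k = {f \<in> cochains n k. hoch_d n k f = (\<lambda>_. 0)}"

definition coboundaries :: "nat \<Rightarrow> nat \<Rightarrow> (nat list \<Rightarrow> 'a::comm_ring_1 poly) set" where
  "coboundaries n k = (if k = 0 then {\<lambda>_. 0} else hoch_d n (k - 1) ` cochains n (k - 1))"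

definition cohom :: "nat \<Rightarrow> nat \<Rightarrow> (nat list \<Rightarrow> 'a::comm_ring_1 poly) \<Rightarrow> (nat list \<Rightarrow> 'a poly) \<Rightarrow> bool" where
  "cohom n k f g \<longleftrightarrow> (\<lambda>is. f is - g is) \<in> coboundaries n k"

definition cup :: "nat \<Rightarrow> nat \<Rightarrow> nat \<Rightarrow> (nat list \<Rightarrow> 'a::comm_ring_1 poly) \<Rightarrow> (nat list \<Rightarrow> 'a poly) \<Rightarrow> nat list \<Rightarrow> 'a poly" where
  "cup n k l f g is = (if is \<in> idx n (k + l) then red n (f (take k is) * g (drop k is)) else 0)"

definition csmult :: "'a::comm_ring_1 \<Rightarrow> (nat list \<Rightarrow> 'a poly) \<Rightarrow> nat list \<Rightarrow> 'a poly" where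
  "csmult c f is = smult c (f is)"

definition csum :: "nat set \<Rightarrow> (nat \<Rightarrow> nat list \<Rightarrow> 'a::comm_ring_1 poly) \<Rightarrow> nat list \<Rightarrow> 'a poly" where
  "csum I F is = (\<Sum>i\<in>I. F i is)"

definition cone :: "nat list \<Rightarrow> 'a::comm_ring_1 poly" where
  "cone is = (if is = [] then 1 else 0)"

fun cpow :: "nat \<Rightarrow> nat \<Rightarrow> (nat list \<Rightarrow> 'a::comm_ring_1 poly) \<Rightarrow> nat \<Rightarrow> nat list \<Rightarrow> 'a poly" where
  "cpow n d f 0 = cone"
| "cpow n d f (Suc k) = cup n d (d * k) f (cpow n d f k)"

definition gx :: "nat \<Rightarrow> nat list \<Rightarrow> 'a::comm_ring_1 poly" where
  "gx n is = (if is = [] then sig n 1 else 0)"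

text \<open>y: the class in HH^1 corresponding to 1 \<in> Ann_A(n sigma^(n-1)) under the
  comparison with the 2-periodic resolution; as a derivation it is d/d sigma,
  sigma^i \<mapsto> i sigma^(i-1).\<close>
definition gy :: "nat \<Rightarrow> nat list \<Rightarrow> 'a::comm_ring_1 poly" where
  "gy n is = (if is \<in> idx n 1 then of_nat (hd is) * sig n (hd is + n - 1) else 0)"

text \<open>z: the class in HH^2 corresponding to 1 \<in> A/(n sigma^(n-1) A) under the
  comparison with the 2-periodic resolution; it is the "carry" cocycle
  (sigma^i, sigma^j) \<mapsto> [i + j \<ge> n] sigma^(i+j) for 0 \<le> i, j < n.\<close>
definition gz :: "nat \<Rightarrow> nat list \<Rightarrow> 'a::comm_ring_1 poly" where
  "gz n is = (if is \<in> idx n 2 \<and> n \<le> is ! 0 + is ! 1 then sig n (is ! 0 + is ! 1) else 0)"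

definition mono :: "nat \<Rightarrow> nat \<Rightarrow> nat \<Rightarrow> nat \<Rightarrow> nat list \<Rightarrow> 'a::comm_ring_1 poly" where
  "mono n i e k = cup n 0 (e + 2 * k) (cpow n 0 (gx n) i)
                     (cup n e (2 * k) (cpow n 1 (gy n) e) (cpow n 2 (gz n) k))"

end

theory Submission
  imports Defs
begin

(* A = R[C_n] is the group algebra of the cyclic group C_n = <sigma>, and C_n is abelian. Writing a
  Hochschild k-cochain as f(sigma^i_1, ..., sigma^i_k) = phi(i_1, ..., i_k) sigma^(i_1 + ... + i_k)
  turns the Hochschild coboundary into the coboundary of inhomogeneous group cochains of C_n with
  trivial coefficients in A, and the cup product into the product of values. So HH^*(A;A) is the
  group cohomology H^*(C_n; A), which we compute by comparing the standard resolution of C_n with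
  the 2-periodic one. Explicit cochain maps in both directions, the one back being built from the
  carry cocycle (i, j) |-> [n <= i + j], and an explicit homotopy between their composite and the
  identity show that every cocycle of degree d >= 1 is cohomologous to a multiple of the cocycle
  w_d, a product of carries (times i_1 in odd degree); when n = 0 in R, the multiple is unique.
  Under the twist, w_d is y^(d mod 2) z^(d div 2), so the x^i y^e z^k with i < n form a basis.
  Finally y^2 - (n choose 2) x^(n-2) z is the coboundary of i |-> -(i choose 2) sigma^(n-2), and
  (n choose 2) vanishes in characteristic p unless p = 2 and m is odd, where it is 1. *)

section \<open>Homogeneous cochains\<close>

definition remove_nth :: "nat \<Rightarrow> 'x list \<Rightarrow> 'x list" where
  "remove_nth i xs = take i xs @ drop (Suc i) xs"

lemma remove_nth_0_Cons [simp]: "remove_nth 0 (a # xs) = xs"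
  by (simp add: remove_nth_def)

lemma remove_nth_Suc_Cons [simp]: "remove_nth (Suc i) (a # xs) = a # remove_nth i xs"
  by (simp add: remove_nth_def)

lemma length_remove_nth [simp]: "i < length xs \<Longrightarrow> length (remove_nth i xs) = length xs - 1"
  by (simp add: remove_nth_def)

lemma remove_nth_map: "remove_nth i (map f xs) = map f (remove_nth i xs)"
  by (simp add: remove_nth_def take_map drop_map)

lemma remove_nth_last: "remove_nth (length x - 1) x = butlast x"
  by (simp add: remove_nth_def butlast_conv_take)

text \<open>A homogeneous d-cochain is a function of (d+1)-tuples of group elements, here lists.\<close>

definition coboundary :: "(nat list \<Rightarrow> 'b::comm_ring_1) \<Rightarrow> nat list \<Rightarrow> 'b" where
  "coboundary F x = (\<Sum>i<length x. (-1)^i * F (remove_nth i x))"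

definition prepend0 :: "(nat list \<Rightarrow> 'b) \<Rightarrow> nat list \<Rightarrow> 'b" where
  "prepend0 F x = F (0 # x)"

lemma coboundary_Nil [simp]: "coboundary G [] = 0"
  by (simp add: coboundary_def)

lemma coboundary_Cons: "coboundary G (a # x) = G x - coboundary (\<lambda>y. G (a # y)) x"
proof -
  have "coboundary G (a # x) = (\<Sum>i<Suc (length x). (-1)^i * G (remove_nth i (a # x)))"
    by (simp add: coboundary_def)
  also have "\<dots> = G x + (\<Sum>i<length x. (-1)^(Suc i) * G (remove_nth (Suc i) (a # x)))"
    by (subst sum.lessThan_Suc_shift) simp
  also have "\<dots> = G x - coboundary (\<lambda>y. G (a # y)) x"
    by (simp add: coboundary_def sum_negf)
  finally show ?thesis .
qed

lemma prepend0_eq: "prepend0 F = (\<lambda>x. F (0 # x))"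
  by (rule ext) (simp add: prepend0_def)

lemma prepend0_coboundary: "prepend0 (coboundary F) x = F x - coboundary (prepend0 F) x"
  by (simp add: prepend0_eq coboundary_Cons)

lemma coboundary_cong:
  assumes "\<And>y. Suc (length y) = length x \<Longrightarrow> F y = G y"
  shows "coboundary F x = coboundary G x"
  unfolding coboundary_def by (rule sum.cong) (auto intro!: arg_cong[where f="\<lambda>t. _ * t"] assms)

lemma coboundary_mult_left: "coboundary (\<lambda>y. c * F y) x = c * coboundary F x"
  by (simp add: coboundary_def sum_distrib_left algebra_simps)

lemma coboundary_diff: "coboundary (\<lambda>y. F y - G y) x = coboundary F x - coboundary G x"
  by (simp add: coboundary_def algebra_simps sum_subtractf)

lemma coboundary_if: "coboundary (\<lambda>y. if P then F y else 0) x = (if P then coboundary F x else 0)"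
  by (simp add: coboundary_def)

lemma coboundary_coboundary: "coboundary (coboundary F) x = 0"
proof (induction x arbitrary: F)
  case (Cons a x)
  have "(\<lambda>y. coboundary F (a # y)) = (\<lambda>y. F y - coboundary (\<lambda>y. F (a # y)) y)"
    by (simp add: coboundary_Cons)
  then show ?case
    by (simp add: coboundary_Cons[of "coboundary F"] coboundary_diff Cons.IH)
qed simp

lemma nat_mod_add_right_cancel:
  fixes i j g n :: nat
  shows "(i + g) mod n = (j + g) mod n \<longleftrightarrow> i mod n = j mod n"
proof
  assume "(i + g) mod n = (j + g) mod n"
  then have "int ((i + g) mod n) = int ((j + g) mod n)"
    by simp
  then have "(int i + int g) mod int n = (int j + int g) mod int n"
    by (simp add: zmod_int)
  then have "int n dvd int i - int j"
    by (simp add: mod_eq_dvd_iff)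
  then show "i mod n = j mod n"
    by (metis mod_eq_dvd_iff of_nat_eq_iff zmod_int)
next
  assume "i mod n = j mod n"
  then show "(i + g) mod n = (j + g) mod n"
    by (metis mod_add_left_eq)
qed

lemma sum_indicator_less: "m \<le> N \<Longrightarrow> (\<Sum>t<N. if t < m then 1 else 0 :: int) = int m"
  by (induction N) (auto simp: less_Suc_eq le_Suc_eq)

lemma sum_mod_shift:
  fixes f :: "nat \<Rightarrow> 'b::comm_monoid_add"
  assumes "0 < n"
  shows "(\<Sum>i<n. f ((i + g) mod n)) = (\<Sum>i<n. f i)"
proof -
  have inj: "inj_on (\<lambda>i. (i + g) mod n) {..<n}"
    by (rule inj_onI) (metis lessThan_iff mod_less nat_mod_add_right_cancel)
  have "(\<lambda>i. (i + g) mod n) ` {..<n} = {..<n}"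
    using inj assms by (intro endo_inj_surj) auto
  then show ?thesis
    using sum.reindex[OF inj, of f] by simp
qed

section \<open>The cyclic group of order n\<close>

text \<open>Group elements are the residues 0, ..., n - 1; arbitrary naturals stand for their residues.\<close>

locale cyclic =
  fixes n :: nat
  assumes n2: "2 \<le> n"
begin

lemma n_pos: "0 < n"
  using n2 by simp

definition shift :: "nat \<Rightarrow> nat list \<Rightarrow> nat list" where
  "shift g x = map (\<lambda>v. (v + g) mod n) x"

definition translate :: "nat \<Rightarrow> (nat list \<Rightarrow> 'b) \<Rightarrow> nat list \<Rightarrow> 'b" where
  "translate g F x = F (shift g x)"

definition mod_invariant :: "(nat list \<Rightarrow> 'b) \<Rightarrow> bool" where
  "mod_invariant F \<longleftrightarrow> (\<forall>x. F (map (\<lambda>v. v mod n) x) = F x)"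

lemma shift_shift: "shift a (shift b x) = shift (a + b) x"
  by (simp add: shift_def mod_add_right_eq add.commute add.left_commute)

lemma shift_cong: "a mod n = b mod n \<Longrightarrow> shift a x = shift b x"
  unfolding shift_def by (metis mod_add_right_eq)

lemma shift_mod: "shift (a mod n) x = shift a x"
  by (rule shift_cong) simp

lemma shift_0: "shift 0 x = map (\<lambda>v. v mod n) x"
  by (simp add: shift_def)

lemma shift_map_mod: "shift g (map (\<lambda>v. v mod n) x) = shift g x"
  by (simp add: shift_def mod_add_left_eq)

lemma length_shift [simp]: "length (shift g x) = length x"
  by (simp add: shift_def)

lemma shift_Cons [simp]: "shift g (a # x) = (a + g) mod n # shift g x"
  by (simp add: shift_def)

lemma shift_Nil [simp]: "shift g [] = []"
  by (simp add: shift_def)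

lemma translate_translate: "translate a (translate b F) = translate (a + b) F"
  by (rule ext) (simp add: translate_def shift_shift add.commute)

lemma translate_cong: "a mod n = b mod n \<Longrightarrow> translate a F = translate b F"
  by (rule ext) (simp add: translate_def shift_cong[of a b])

lemma translate_mod: "translate (a mod n) F = translate a F"
  by (rule translate_cong) simp

lemma remove_nth_shift: "remove_nth i (shift g x) = shift g (remove_nth i x)"
  by (simp add: shift_def remove_nth_map)

lemma coboundary_translate: "coboundary (translate g F) = translate g (coboundary F)"
  by (rule ext) (simp add: coboundary_def translate_def remove_nth_shift)

lemma mod_invariant_translate: "mod_invariant (translate g F)"
  by (simp add: mod_invariant_def translate_def shift_map_mod)

lemma mod_invariant_coboundary: "mod_invariant F \<Longrightarrow> mod_invariant (coboundary F)"
  unfolding mod_invariant_def coboundary_def by (simp add: remove_nth_map)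

lemma translate_eq: "translate g F = (\<lambda>x. F (shift g x))"
  by (rule ext) (simp add: translate_def)

subsection \<open>Comparison with the periodic resolution\<close>

text \<open>Evaluation on the image of the generator of the 2-periodic resolution in the standard one; the
  periodic differentials alternate between \<sigma> - 1 and the norm element, and prepend0 is the
  contracting homotopy of the standard resolution.\<close>

primrec to_periodic :: "nat \<Rightarrow> (nat list \<Rightarrow> 'b::comm_ring_1) \<Rightarrow> 'b" where
  "to_periodic 0 F = F [0]"
| "to_periodic (Suc d) F =
    (if even d then to_periodic d (translate 1 (prepend0 F)) - to_periodic d (prepend0 F)
                    else (\<Sum>i<n. to_periodic d (translate i (prepend0 F))))"

lemma to_periodic_add: "to_periodic d (\<lambda>x. F x + G x) = to_periodic d F + to_periodic d G"
  by (induction d arbitrary: F G) (simp_all add: translate_eq prepend0_eq sum.distrib)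

lemma to_periodic_minus: "to_periodic d (\<lambda>x. - F x) = - to_periodic d F"
  by (induction d arbitrary: F) (simp_all add: translate_eq prepend0_eq sum_negf)

lemma to_periodic_diff: "to_periodic d (\<lambda>x. F x - G x) = to_periodic d F - to_periodic d G"
  using to_periodic_add[of d F "\<lambda>x. - G x"] to_periodic_minus[of d G] by simp

lemma to_periodic_mult_right: "to_periodic d (\<lambda>x. F x * c) = to_periodic d F * c"
  by (induction d arbitrary: F)
      (simp_all add: translate_eq prepend0_eq sum_distrib_right left_diff_distrib)

lemma to_periodic_mult_left: "to_periodic d (\<lambda>x. c * F x) = c * to_periodic d F"
proof (induction d arbitrary: F)
  case 0 then show ?case by simp
next
  case (Suc d)
  show ?case by (simp add: translate_eq prepend0_eq Suc.IH right_diff_distrib sum_distrib_left)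
qed

lemma to_periodic_zero: "to_periodic d (\<lambda>x. 0) = 0"
  using to_periodic_mult_right[of d "\<lambda>x. 0" 0] by simp

lemma to_periodic_cong:
  "(\<And>y. length y = Suc d \<Longrightarrow> hd y = 0 \<Longrightarrow> F y = G y) \<Longrightarrow> to_periodic d F = to_periodic d G"
proof (induction d arbitrary: F G)
  case 0 then show ?case by simp
next
  case (Suc d)
  have h: "to_periodic d (translate i (prepend0 F)) = to_periodic d
      (translate i (prepend0 G))" for i
    by (rule Suc.IH) (auto simp: translate_def prepend0_def intro!: Suc.prems)
  have h2: "to_periodic d (prepend0 F) = to_periodic d (prepend0 G)"
    by (rule Suc.IH) (auto simp: prepend0_def intro!: Suc.prems)
  show ?case by (simp add: h h2)
qed

lemma sum_translate_shift:
  "(\<Sum>i<n. to_periodic d (translate i (translate g F))) = (\<Sum>i<n. to_periodic d (translate i F))"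
proof -
  have "(\<Sum>i<n. to_periodic d (translate i (translate g F)))
      = (\<Sum>i<n. to_periodic d (translate ((i + g) mod n) F))"
    by (simp add: translate_translate translate_mod add.commute)
  also have "\<dots> = (\<Sum>i<n. to_periodic d (translate i F))"
    by (rule sum_mod_shift[OF n_pos])
  finally show ?thesis .
qed

lemma translate_prepend0_coboundary:
  "translate i (prepend0 (coboundary F)) =
      (\<lambda>x. translate i F x - coboundary (translate i (prepend0 F)) x)"
  by (rule ext) (simp add: translate_def prepend0_coboundary coboundary_translate)

lemma to_periodic_coboundary:
  "to_periodic (Suc d) (coboundary F) =
      (if even d then to_periodic d (translate 1 F) - to_periodic d F
     else (\<Sum>i<n. to_periodic d (translate i F)))"
proof (induction d arbitrary: F)
  case 0
  have "to_periodic 0 (translate 1 (coboundary (prepend0 F))) = to_periodic 0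
      (coboundary (prepend0 F))"
    by (simp add: translate_def coboundary_def)
  then show ?case
    by (simp add: translate_def prepend0_coboundary)
next
  case (Suc d)
  let ?\<Gamma> = "to_periodic (Suc d)"
  have prepend0: "prepend0 (coboundary F) = (\<lambda>x. F x - coboundary (prepend0 F) x)"
    by (rule ext) (simp add: prepend0_coboundary)
  show ?case
  proof (cases "even d")
    case True
    have "to_periodic (Suc (Suc d)) (coboundary F)
        = (\<Sum>i<n. ?\<Gamma> (translate i F) - ?\<Gamma> (coboundary (translate i (prepend0 F))))"
      using True by (simp only: to_periodic.simps(2)[of "Suc d"] if_False even_Suc
          translate_prepend0_coboundary
          to_periodic_diff) simp
    also have "\<dots> = (\<Sum>i<n. ?\<Gamma> (translate i F))
        - (\<Sum>i<n. to_periodic d (translate i (translate 1 (prepend0 F)))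
           - to_periodic d (translate i (prepend0 F)))"
      using True by (simp only: Suc.IH if_True sum_subtractf translate_translate add.commute)
    finally show ?thesis
      using True by (simp add: sum_subtractf sum_translate_shift)
  next
    case False
    have "to_periodic (Suc (Suc d)) (coboundary F)
        = ?\<Gamma> (translate 1 (prepend0 (coboundary F))) - ?\<Gamma> (prepend0 (coboundary F))"
      using False by simp
    also have "\<dots> = (?\<Gamma> (translate 1 F) - ?\<Gamma> (coboundary (translate 1 (prepend0 F))))
          - (?\<Gamma> F - ?\<Gamma> (coboundary (prepend0 F)))"
      by (simp only: translate_prepend0_coboundary[of 1] to_periodic_diff)
        (simp only: prepend0 to_periodic_diff)
    also have "\<dots> =
        (?\<Gamma> (translate 1 F) - (\<Sum>i<n. to_periodic d (translate i (translate 1 (prepend0 F)))))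
        - (?\<Gamma> F - (\<Sum>i<n. to_periodic d (translate i (prepend0 F))))"
      using False by (simp only: Suc.IH if_False)
    finally show ?thesis
      using False by (simp add: sum_translate_shift)
  qed
qed

definition cdiff :: "nat \<Rightarrow> nat \<Rightarrow> nat" where
  "cdiff a b = nat ((int b - int a) mod int n)"

lemma int_cdiff: "int (cdiff a b) = (int b - int a) mod int n"
  using n_pos by (simp add: cdiff_def)

lemma cdiff_lt: "cdiff a b < n"
proof -
  have "(int b - int a) mod int n < int n" using n_pos by simp
  then show ?thesis using int_cdiff[of a b] by linarith
qed

lemma cdiff_eqI: "int (cdiff a b) = int (cdiff c d) \<Longrightarrow> cdiff a b = cdiff c d" by simp

lemma cdiff_mod1 [simp]: "cdiff (a mod n) b = cdiff a b"
  by (rule cdiff_eqI) (simp add: int_cdiff zmod_int mod_diff_right_eq)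

lemma cdiff_mod2 [simp]: "cdiff a (b mod n) = cdiff a b"
  by (rule cdiff_eqI) (simp add: int_cdiff zmod_int mod_diff_left_eq)

lemma cdiff_shift: "cdiff (a + g) (b + g) = cdiff a b"
  by (rule cdiff_eqI) (simp add: int_cdiff)

lemma cdiff_self [simp]: "cdiff a a = 0"
  by (simp add: cdiff_def)

lemma cdiff_add: "(cdiff a b + cdiff b c) mod n = cdiff a c"
proof -
  have "int ((cdiff a b + cdiff b c) mod n) = (int (cdiff a b) + int (cdiff b c)) mod int n"
    by (simp add: zmod_int)
  also have "\<dots> = ((int b - int a) + (int c - int b)) mod int n"
    by (simp add: int_cdiff mod_add_eq)
  also have "\<dots> = int (cdiff a c)" by (simp add: int_cdiff)
  finally show ?thesis by simp
qed

lemma cdiff_0: "cdiff 0 b = b mod n"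
proof -
  have "int (cdiff 0 b) = int (b mod n)" by (simp add: int_cdiff zmod_int)
  then show ?thesis by simp
qed

lemma cdiff_from: "cdiff a ((a + g) mod n) = g mod n"
proof -
  have "int (cdiff a ((a + g) mod n)) = int (g mod n)"
      by (simp add: int_cdiff zmod_int mod_diff_left_eq)
  then show ?thesis by simp
qed

lemma cdiff_eq0_iff: "cdiff a b = 0 \<longleftrightarrow> a mod n = b mod n"
proof -
  have "cdiff a b = 0 \<longleftrightarrow> (int b - int a) mod int n = 0" using int_cdiff[of a b] by linarith
  also have "\<dots> \<longleftrightarrow> int b mod int n = int a mod int n"
      by (simp add: mod_eq_dvd_iff dvd_eq_mod_eq_0[symmetric])
  also have "\<dots> \<longleftrightarrow> a mod n = b mod n" by (metis of_nat_eq_iff zmod_int)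
  finally show ?thesis .
qed

lemma int_mod_add_diff_mod: "(x mod m + m - y mod m) mod m = (x - y) mod (m::int)"
proof -
  have "(x mod m + m - y mod m) mod m = ((x mod m - y mod m) + m) mod m"
      by (simp add: algebra_simps)
  also have "\<dots> = (x mod m - y mod m) mod m" by simp
  also have "\<dots> = (x - y) mod m" by (simp add: mod_diff_eq)
  finally show ?thesis .
qed

lemma cdiff_sub: "cdiff b h = (cdiff a h + (n - cdiff a b)) mod n"
proof -
  have "int ((cdiff a h + (n - cdiff a b)) mod n) =
      (int (cdiff a h) + int n - int (cdiff a b)) mod int n"
    using cdiff_lt[of a b] by (simp add: zmod_int of_nat_diff)
  also have "\<dots> = ((int h - int a) mod int n + int n - (int b - int a) mod int n) mod int n"
    by (simp add: int_cdiff)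
  also have "\<dots> = ((int h - int a) - (int b - int a)) mod int n"
    by (rule int_mod_add_diff_mod)
  also have "\<dots> = int (cdiff b h)" by (simp add: int_cdiff)
  finally show ?thesis by simp
qed

lemma mod_2n: "x < 2 * n \<Longrightarrow> x mod n = (if x < n then x else x - n)"
  by (simp add: le_mod_geq)

definition carry :: "nat \<Rightarrow> nat \<Rightarrow> int" where
  "carry a b = (if n \<le> a + b then 1 else 0)"

lemma carry_cocycle:
  assumes "u < n" "v < n" "w < n"
  shows "carry v w - carry ((u + v) mod n) w + carry u ((v + w) mod n) - carry u v = 0"
  using assms by (auto simp: carry_def mod_2n)

definition carry3 :: "nat \<Rightarrow> nat \<Rightarrow> nat \<Rightarrow> int" where
  "carry3 a b c = carry (cdiff a b) (cdiff b c)"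

lemma carry3_cocycle: "carry3 b c d - carry3 a c d + carry3 a b d - carry3 a b c = 0"
proof -
  have "cdiff a c = (cdiff a b + cdiff b c) mod n" by (simp add: cdiff_add)
  moreover have "cdiff b d = (cdiff b c + cdiff c d) mod n" by (simp add: cdiff_add)
  ultimately show ?thesis
    unfolding carry3_def using carry_cocycle[of "cdiff a b" "cdiff b c" "cdiff c d"]
    by (simp add: cdiff_lt)
qed

lemma carry3_eq_coboundary_indicator:
  assumes "h < n"
  shows "(if cdiff b h < cdiff b c then 1 else 0) - (if cdiff a h < cdiff a c then 1 else 0)
       + (if cdiff a h < cdiff a b then 1 else 0) = carry3 a b c"
proof -
  define t u v where "t = cdiff a h" "u = cdiff a b" "v = cdiff b c"
  have tuv: "t < n" "u < n" "v < n" unfolding t_u_v_def by (simp_all add: cdiff_lt)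
  have 1: "cdiff b h = (t + (n - u)) mod n" unfolding t_u_v_def by (rule cdiff_sub)
  have 2: "cdiff a c = (u + v) mod n" unfolding t_u_v_def by (simp add: cdiff_add)
  show ?thesis unfolding carry3_def carry_def 1 2 t_u_v_def[symmetric] using tuv
    by (auto simp: mod_2n)
qed

fun carry_prod :: "nat list \<Rightarrow> int" where
  "carry_prod (a # b # c # r) = carry3 a b c * carry_prod (c # r)"
| "carry_prod _ = 1"

lemma carry3_shift: "carry3 ((a + g) mod n) ((b + g) mod n) ((c + g) mod n) = carry3 a b c"
  by (simp add: carry3_def cdiff_shift)

lemma carry_prod_shift: "carry_prod (shift g x) = carry_prod x"
  by (induction x rule: carry_prod.induct) (simp_all add: carry3_shift)

lemma carry_prod_coboundary: "length x = 2 * k + 2 \<Longrightarrow> coboundary carry_prod x = 0"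
proof (induction k arbitrary: x)
  case 0
  then obtain a b where "x = [a, b]"
    by (auto simp: length_Suc_conv numeral_2_eq_2)
  then show ?case
    by (simp add: coboundary_Cons)
next
  case (Suc k)
  have "length x = Suc (Suc (Suc (Suc (2 * k))))" using Suc.prems by simp
  then obtain a b c d r where x: "x = a # b # c # d # r" and lr: "length r = 2 * k"
    by (auto simp: length_Suc_conv)
  have "coboundary carry_prod (c # d # r) = 0"
    using Suc.IH lr by simp
  then have "coboundary (\<lambda>y. carry_prod (c # y)) (d # r) = carry_prod (d # r)"
    by (simp add: coboundary_Cons)
  then have "coboundary (\<lambda>y. carry_prod (a # b # c # y)) (d # r) = carry3 a b c * carry_prod (d # r)"
    by (simp add: coboundary_mult_left)
  moreover have "carry_prod (d # r) * (carry3 a b d + carry3 b c d)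
      = carry_prod (d # r) * (carry3 a b c + carry3 a c d)"
    using carry3_cocycle[of b c d a] by simp
  ultimately show ?case
    by (simp add: x coboundary_Cons algebra_simps)
qed

lemma carry_prod_coboundary_Cons:
  "length x = 2 * k + 1 \<Longrightarrow> coboundary (\<lambda>y. carry_prod (a # y)) x = carry_prod x"
  using carry_prod_coboundary[of "a # x" k] by (simp add: coboundary_Cons)

text \<open>The coefficient of \<sigma>^h in the image of the basis element x of the standard resolution
  under the chain map to the periodic one.\<close>

definition comparison_coeff :: "nat list \<Rightarrow> nat \<Rightarrow> int" where
  "comparison_coeff x h = (if odd (length x) then (if h = hd x mod n then carry_prod x else 0)
             else (if cdiff (hd x) h < cdiff (hd x) (x ! 1) then carry_prod (tl x) else 0))"

lemma cdiff_pred: "cdiff a ((h + n - 1) mod n) = (cdiff a h + (n - 1)) mod n"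
proof -
  have "int (cdiff a ((h + n - 1) mod n)) = ((int h + int n - 1) - int a) mod int n"
    using n_pos by (simp add: int_cdiff zmod_int mod_diff_left_eq of_nat_diff)
  also have "\<dots> = ((int h - int a) + (int n - 1)) mod int n"
    by (simp add: algebra_simps)
  also have "\<dots> = (((int h - int a) mod int n) + (int n - 1)) mod int n"
    by (rule mod_add_left_eq[symmetric])
  also have "\<dots> = int ((cdiff a h + (n - 1)) mod n)"
    using n_pos by (simp add: int_cdiff zmod_int of_nat_diff add_diff_eq)
  finally show ?thesis by simp
qed

lemma cdiff_inj: "cdiff a x = cdiff a y \<longleftrightarrow> x mod n = y mod n"
proof -
  have "cdiff a x = cdiff a y \<longleftrightarrow> (int x - int a) mod int n = (int y - int a) mod int n"
    using int_cdiff[of a x] int_cdiff[of a y] by (metis of_nat_eq_iff)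
  also have "\<dots> \<longleftrightarrow> int x mod int n = int y mod int n"
    by (simp add: mod_eq_dvd_iff)
  also have "\<dots> \<longleftrightarrow> x mod n = y mod n" by (metis of_nat_eq_iff zmod_int)
  finally show ?thesis .
qed

lemma comparison_coeff_coboundary_even:
  assumes "length x = 2 * k + 2" "h < n"
  shows "comparison_coeff x ((h + n - 1) mod n) - comparison_coeff x h = coboundary
      (\<lambda>y. comparison_coeff y h) x"
proof -
  have "length x = Suc (Suc (2 * k))" using assms(1) by simp
  then obtain a b r where x: "x = a # b # r" and lr: "length r = 2 * k"
    by (auto simp: length_Suc_conv)
  have c1: "coboundary (\<lambda>y. comparison_coeff (a # y) h) (b # r) =
      (if h = a mod n then carry_prod (b # r) else 0)"
  proof -
    have "coboundary (\<lambda>y. comparison_coeff (a # y) h) (b # r) = coboundary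
        (\<lambda>y. if h = a mod n then carry_prod (a # y) else 0) (b # r)"
      by (rule coboundary_cong) (simp add: comparison_coeff_def lr)
    also have "\<dots> = (if h = a mod n then carry_prod (b # r) else 0)"
      using carry_prod_coboundary_Cons[of "b # r" k a] lr by (simp add: coboundary_if)
    finally show ?thesis .
  qed
  have ar: "(if cdiff a ((h + n - 1) mod n) < cdiff a b then 1 else 0) -
      (if cdiff a h < cdiff a b then 1 else 0)
        = (if h = b mod n then 1 else 0) - (if h = a mod n then (1::int) else 0)"
  proof -
    have hb: "h = b mod n \<longleftrightarrow> cdiff a h = cdiff a b" using cdiff_inj[of a h b] assms(2) by simp
    have ha: "h = a mod n \<longleftrightarrow> cdiff a h = 0" using cdiff_eq0_iff[of a h] assms(2) by auto
    have "cdiff a h < n" "cdiff a b < n" by (simp_all add: cdiff_lt)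
    then show ?thesis unfolding hb ha cdiff_pred using n_pos
      by (auto simp: mod_2n)
  qed
  have "comparison_coeff x ((h + n - 1) mod n) - comparison_coeff x h
     = ((if cdiff a ((h + n - 1) mod n) < cdiff a b then 1 else 0) -
         (if cdiff a h < cdiff a b then 1 else 0)) * carry_prod (b # r)"
    by (simp add: comparison_coeff_def x lr algebra_simps)
  also have "\<dots> = comparison_coeff (b # r) h - (if h = a mod n then carry_prod (b # r) else 0)"
    unfolding ar by (simp add: comparison_coeff_def lr algebra_simps)
  also have "\<dots> = coboundary (\<lambda>y. comparison_coeff y h) x"
    unfolding x coboundary_Cons[of "\<lambda>y. comparison_coeff y h" a "b # r"] c1 by simp
  finally show ?thesis .
qed

lemma comparison_coeff_coboundary_odd:
  assumes "length x = 2 * k + 3" "h < n"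
  shows "(\<Sum>h'<n. comparison_coeff x h') = coboundary (\<lambda>y. comparison_coeff y h) x"
proof -
  have "length x = Suc (Suc (Suc (2 * k)))" using assms(1) by simp
  then obtain a b c r where x: "x = a # b # c # r" and lr: "length r = 2 * k"
    by (auto simp: length_Suc_conv)
  have c1: "coboundary (\<lambda>y. comparison_coeff (a # b # y) h) (c # r) =
      (if cdiff a h < cdiff a b then carry_prod (c # r) else 0)"
  proof -
    have "coboundary (\<lambda>y. comparison_coeff (a # b # y) h) (c # r) = coboundary
        (\<lambda>y. if cdiff a h < cdiff a b then carry_prod (b # y) else 0) (c # r)"
      by (rule coboundary_cong) (simp add: comparison_coeff_def lr)
    also have "\<dots> = (if cdiff a h < cdiff a b then carry_prod (c # r) else 0)"
      using carry_prod_coboundary_Cons[of "c # r" k b] lr by (simp add: coboundary_if)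
    finally show ?thesis .
  qed
  have lhs: "(\<Sum>h'<n. comparison_coeff x h') = carry_prod x"
  proof -
    have "(\<Sum>h'<n. comparison_coeff x h') = (\<Sum>h'<n. if h' = a mod n then carry_prod x else 0)"
      by (rule sum.cong) (simp_all add: comparison_coeff_def x lr)
    also have "\<dots> = carry_prod x" using n_pos by (simp add: sum.delta)
    finally show ?thesis .
  qed
  have "coboundary (\<lambda>y. comparison_coeff y h) x = comparison_coeff (b # c # r) h -
      (comparison_coeff (a # c # r) h - (if cdiff a h < cdiff a b then carry_prod (c # r) else 0))"
    unfolding x coboundary_Cons[of "\<lambda>y. comparison_coeff y h" a "b # c # r"]
      coboundary_Cons[of "\<lambda>y. comparison_coeff (a # y) h" b "c # r"] c1
    by simp
  also have "\<dots> =
      ((if cdiff b h < cdiff b c then 1 else 0) - (if cdiff a h < cdiff a c then 1 else 0)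
       + (if cdiff a h < cdiff a b then 1 else 0)) * carry_prod (c # r)"
    by (simp add: comparison_coeff_def lr algebra_simps)
  also have "\<dots> = carry_prod x" unfolding carry3_eq_coboundary_indicator[OF assms(2)]
      by (simp add: x)
  finally show ?thesis using lhs by simp
qed

definition via_periodic :: "(nat list \<Rightarrow> 'b::comm_ring_1) \<Rightarrow> nat list \<Rightarrow> 'b" where
  "via_periodic F x = (\<Sum>h<n. of_int (comparison_coeff x h) * to_periodic (length x - 1)
      (translate h F))"

lemma translate_translate_mod: "translate ((a + b) mod n) F = translate a (translate b F)"
  by (simp add: translate_mod translate_translate add.commute)

lemma sum_mod_pred_shift:
  "(\<Sum>h<n. f h ((h + 1) mod n)) = (\<Sum>h<n. f ((h + n - 1) mod n) h)"
proof -
  have "(\<Sum>h<n. f h ((h + 1) mod n))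
      = (\<Sum>h<n. f ((h + (n - 1)) mod n) (((h + (n - 1)) mod n + 1) mod n))"
    by (rule sum_mod_shift[OF n_pos, symmetric])
  also have "\<dots> = (\<Sum>h<n. f ((h + n - 1) mod n) h)"
  proof (rule sum.cong[OF refl])
    fix h assume "h \<in> {..<n}"
    moreover have "((h + (n - 1)) mod n + 1) mod n = (h + (n - 1) + 1) mod n"
      by (rule mod_add_left_eq)
    moreover have "h + (n - 1) + 1 = h + n"
      using n_pos by simp
    ultimately show "f ((h + (n - 1)) mod n) (((h + (n - 1)) mod n + 1) mod n) = f
        ((h + n - 1) mod n) h"
      using n_pos by simp
  qed
  finally show ?thesis .
qed

lemma via_periodic_coboundary:
  assumes "length x = Suc (Suc d)"
  shows "via_periodic (coboundary F) x = coboundary (via_periodic F) x"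
proof -
  define \<Gamma> where "\<Gamma> h = to_periodic d (translate h F)" for h
  have "to_periodic (Suc d) (coboundary (translate h F))
      = (if even d then \<Gamma> ((h + 1) mod n) - \<Gamma> h else (\<Sum>j<n. \<Gamma> j))" for h
  proof -
    have "(\<Sum>j<n. to_periodic d (translate j (translate h F))) = (\<Sum>j<n. \<Gamma> j)"
      unfolding \<Gamma>_def by (rule sum_translate_shift)
    moreover have "to_periodic d (translate 1 (translate h F)) = \<Gamma> ((h + 1) mod n)"
      unfolding \<Gamma>_def translate_mod translate_translate by (simp add: add.commute)
    ultimately show ?thesis
      unfolding to_periodic_coboundary by (simp add: \<Gamma>_def)
  qed
  then have lhs: "via_periodic (coboundary F) x = (\<Sum>h<n. of_int (comparison_coeff x h) *
     (if even d then \<Gamma> ((h + 1) mod n) - \<Gamma> h else (\<Sum>j<n. \<Gamma> j)))"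
    by (simp add: via_periodic_def assms coboundary_translate)
  have "coboundary (via_periodic F) x
      = (\<Sum>i<length x. (-1)^i * (\<Sum>h<n. of_int (comparison_coeff (remove_nth i x) h) * \<Gamma> h))"
    unfolding coboundary_def via_periodic_def \<Gamma>_def using assms by simp
  also have "\<dots> = (\<Sum>h<n. of_int (coboundary (\<lambda>y. comparison_coeff y h) x) * \<Gamma> h)"
    by (simp add: coboundary_def sum_distrib_left sum_distrib_right sum.swap[of _ "{..<n}"]
        algebra_simps)
  finally have rhs: "coboundary (via_periodic F) x
      = (\<Sum>h<n. of_int (coboundary (\<lambda>y. comparison_coeff y h) x) * \<Gamma> h)" .
  show ?thesis
  proof (cases "even d")
    case True
    then obtain k where "length x = 2 * k + 2"
      using assms by (auto elim!: evenE)
    then show ?thesis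
      unfolding lhs rhs
      using True sum_mod_pred_shift[of "\<lambda>h h'. of_int (comparison_coeff x h) * \<Gamma> h'"]
      by (simp add: comparison_coeff_coboundary_even[symmetric] algebra_simps sum_subtractf)
  next
    case False
    then obtain k where "length x = 2 * k + 3"
      using assms by (auto elim!: oddE)
    then have "(\<Sum>h<n. of_int (coboundary (\<lambda>y. comparison_coeff y h) x) * \<Gamma> h)
        = (\<Sum>h<n. of_int (\<Sum>h'<n. comparison_coeff x h') * \<Gamma> h)"
      by (intro sum.cong refl) (simp add: comparison_coeff_coboundary_odd)
    also have "\<dots> = (\<Sum>h<n. of_int (comparison_coeff x h)) * (\<Sum>j<n. \<Gamma> j)"
      by (simp add: sum_distrib_left)
    also have "\<dots> = (\<Sum>h<n. of_int (comparison_coeff x h) * (\<Sum>j<n. \<Gamma> j))"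
      by (rule sum_distrib_right)
    finally show ?thesis
      unfolding lhs rhs using False by simp
  qed
qed

lemma comparison_coeff_shift:
  assumes "z \<noteq> []" "h < n"
  shows "comparison_coeff (shift g z) ((h + g) mod n) = comparison_coeff z h"
proof -
  obtain a r where z: "z = a # r" using assms(1) by (cases z) auto
  show ?thesis
  proof (cases "odd (length z)")
    case True
    have "(h + g) mod n = (a + g) mod n \<longleftrightarrow> h = a mod n"
      using assms(2) by (simp add: nat_mod_add_right_cancel)
    then show ?thesis using True unfolding comparison_coeff_def
      by (simp add: carry_prod_shift[of g "a # r", simplified] z)
  next
    case False
    then obtain b r' where r: "r = b # r'" using z by (cases r) auto
    have "carry_prod (shift g (b # r')) = carry_prod (b # r')" by (rule carry_prod_shift)
    then show ?thesis using False unfolding comparison_coeff_def z r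
      by (simp add: cdiff_shift)
  qed
qed

lemma comparison_coeff_map_mod:
  assumes "h < n"
  shows "comparison_coeff (map (\<lambda>v. v mod n) x) h = comparison_coeff x h"
proof (cases "x = []")
  case True then show ?thesis by simp
next
  case False
  then show ?thesis using comparison_coeff_shift[OF False assms, of 0] assms by (simp add: shift_0)
qed

lemma via_periodic_shift:
  assumes "z \<noteq> []"
  shows "via_periodic F (shift g z) = via_periodic (translate g F) z"
proof -
  have "via_periodic F (shift g z) =
      (\<Sum>h<n. of_int (comparison_coeff (shift g z) ((h + g) mod n)) * to_periodic (length z - 1)
      (translate ((h + g) mod n) F))"
    unfolding via_periodic_def length_shift
    by (rule sum_mod_shift[OF n_pos, symmetric,
          where f = "\<lambda>h. of_int (comparison_coeff (shift g z) h) * to_periodic (length z - 1) (translate h F)"])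
  also have "\<dots> = via_periodic (translate g F) z"
    unfolding via_periodic_def
    by (rule sum.cong[OF refl]) (simp add: comparison_coeff_shift[OF assms] translate_translate_mod)
  finally show ?thesis .
qed

lemma via_periodic_map_mod: "via_periodic F (map (\<lambda>v. v mod n) x) = via_periodic F x"
  unfolding via_periodic_def by (rule sum.cong[OF refl]) (simp add: comparison_coeff_map_mod)

lemma via_periodic_singleton:
  assumes "mod_invariant F"
  shows "via_periodic F [a] = F [a]"
proof -
  have "via_periodic F [a] = (\<Sum>h<n. if h = a mod n then F (shift h [0]) else 0)"
    unfolding via_periodic_def
    by (rule sum.cong[OF refl]) (simp add: comparison_coeff_def translate_def)
  also have "\<dots> = F (shift (a mod n) [0])" using n_pos by (simp add: sum.delta)
  also have "\<dots> = F (map (\<lambda>v. v mod n) [a])" by simp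
  also have "\<dots> = F [a]" using spec[OF assms[unfolded mod_invariant_def], of "[a]"] by simp
  finally show ?thesis .
qed

lemma via_periodic_diff: "via_periodic (\<lambda>x. F x - G x) y = via_periodic F y - via_periodic G y"
  unfolding via_periodic_def by (simp add: translate_eq to_periodic_diff algebra_simps sum_subtractf)

lemma mod_invariant_prepend0: "mod_invariant F \<Longrightarrow> mod_invariant (prepend0 F)"
  unfolding mod_invariant_def prepend0_def by (metis list.simps(9) mod_0)

text \<open>The usual recursion h_(k+1) = (id - via_periodic - \<delta> h_k) s for a homotopy built from the
  contracting homotopy s = prepend0, made equivariant by first translating the head of x to 0.\<close>

primrec homotopy_op :: "nat \<Rightarrow> (nat list \<Rightarrow> 'b::comm_ring_1) \<Rightarrow> nat list \<Rightarrow> 'b" where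
  "homotopy_op 0 F = (\<lambda>x. 0)"
| "homotopy_op (Suc k) F =
    (\<lambda>x. let g = hd x mod n; T = prepend0 (translate g F); z = shift (n - g) x
      in T z - via_periodic T z - coboundary (homotopy_op k T) z)"

lemma homotopy_op_diff:
  "homotopy_op k (\<lambda>x. F x - G x) = (\<lambda>x. homotopy_op k F x - homotopy_op k G x)"
proof (induction k arbitrary: F G)
  case 0 then show ?case by simp
next
  case (Suc k)
  show ?case
  proof (rule ext)
    fix x
    define g where "g = hd x mod n"
    have eT: "prepend0 (translate g (\<lambda>x. F x - G x)) =
        (\<lambda>y. prepend0 (translate g F) y - prepend0 (translate g G) y)"
      by (simp add: prepend0_eq translate_eq)
    show "homotopy_op (Suc k) (\<lambda>x. F x - G x) x = homotopy_op (Suc k) F x - homotopy_op (Suc k) G x"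
      by (simp add: Let_def g_def[symmetric] eT via_periodic_diff Suc.IH coboundary_diff)
  qed
qed

lemma homotopy_op_zero: "homotopy_op k (\<lambda>x. 0) = (\<lambda>x. 0)"
  using homotopy_op_diff[of k "\<lambda>x. 0" "\<lambda>x. 0"] by simp

lemma mod_invariant_homotopy_op: "mod_invariant (homotopy_op k F)"
proof (cases k)
  case 0 then show ?thesis by (simp add: mod_invariant_def)
next
  case (Suc k')
  have "homotopy_op k F (map (\<lambda>v. v mod n) x) = homotopy_op k F x" for x
  proof (cases x)
    case Nil then show ?thesis by simp
  next
    case (Cons a r)
    then show ?thesis by (simp add: Suc Let_def shift_map_mod[of _ "a # r", simplified])
  qed
  then show ?thesis by (simp add: mod_invariant_def)
qed

lemma neg_mod_add_shift: "(n - (a + g) mod n + g) mod n = (n - a mod n) mod n"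
proof -
  have l1: "(a + g) mod n < n" "a mod n < n" using n_pos by simp_all
  have l2: "(a + g) mod n \<le> n" using l1 by simp
  have "int ((n - (a + g) mod n + g) mod n) = int (n - (a + g) mod n + g) mod int n"
    by (simp only: zmod_int)
  also have "int (n - (a + g) mod n + g) = int n - int ((a + g) mod n) + int g"
    using l2 by (simp add: of_nat_diff)
  finally have "int ((n - (a + g) mod n + g) mod n) = (int n - int ((a + g) mod n) + int g)
      mod int n" .
  also have "\<dots> = (int n - (int a + int g) mod int n + int g) mod int n"
    by (simp add: zmod_int)
  also have "\<dots> = (int n - (int a + int g) + int g) mod int n"
    by (metis (no_types, opaque_lifting) add_diff_eq mod_add_left_eq mod_diff_right_eq)
  also have "\<dots> = (int n - int a) mod int n"
    by simp
  also have "\<dots> = (int n - int a mod int n) mod int n"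
    by (rule mod_diff_right_eq[symmetric])
  also have "\<dots> = int ((n - a mod n) mod n)"
    using l1 by (simp add: zmod_int of_nat_diff)
  finally show ?thesis by simp
qed

lemma homotopy_op_shift:
  assumes "y \<noteq> []"
  shows "homotopy_op k F (shift g y) = homotopy_op k (translate g F) y"
proof (cases k)
  case 0 then show ?thesis by simp
next
  case (Suc k')
  obtain a r where y: "y = a # r" using assms by (cases y) auto
  have g1: "translate ((a + g) mod n) F = translate (a mod n) (translate g F)"
    by (simp add: translate_translate translate_mod[of "a + g"]
        translate_cong[of "a mod n + g" "a + g"] mod_add_left_eq)
  have z1: "shift (n - (a + g) mod n) (shift g y) = shift (n - a mod n) y"
    by (simp add: shift_shift shift_cong[OF neg_mod_add_shift]
        shift_mod[of "n - a mod n", symmetric])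
  have h1: "hd (shift g y) mod n = (a + g) mod n" by (simp add: y)
  have h2: "hd y mod n = a mod n" by (simp add: y)
  show ?thesis
    unfolding Suc homotopy_op.simps Let_def h1 h2 g1 z1[folded y] by (rule refl)
qed

lemma shift_complement:
  assumes "g < n"
  shows "shift g (shift (n - g) x) = map (\<lambda>v. v mod n) x"
proof -
  have "shift g (shift (n - g) x) = shift (g + (n - g)) x"
    by (simp add: shift_shift)
  also have "\<dots> = shift 0 x"
    using assms by (intro shift_cong) simp
  finally show ?thesis
    by (simp add: shift_0)
qed

lemma coboundary_homotopy_op_shift:
  assumes "length z = Suc k"
  shows "coboundary (homotopy_op k F) (shift g z) = coboundary (homotopy_op k (translate g F)) z"
proof -
  have "coboundary (homotopy_op k F) (shift g z) = coboundary (\<lambda>y. homotopy_op k F (shift g y)) z"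
    by (simp add: coboundary_def remove_nth_shift)
  also have "\<dots> = coboundary (homotopy_op k (translate g F)) z"
  proof (rule coboundary_cong)
    fix y :: "nat list" assume "Suc (length y) = length z"
    then show "homotopy_op k F (shift g y) = homotopy_op k (translate g F) y"
      using assms by (cases "y = []") (simp_all add: homotopy_op_shift)
  qed
  finally show ?thesis .
qed

lemma homotopy_formula_step:
  fixes F :: "nat list \<Rightarrow> 'b::comm_ring_1"
  assumes on_coboundaries: "\<And>(S :: nat list \<Rightarrow> 'b) z. mod_invariant S \<Longrightarrow> length z = Suc k \<Longrightarrow>
      via_periodic (coboundary S) z - coboundary S z + coboundary
          (homotopy_op k (coboundary S)) z = 0"
    and F: "mod_invariant F" and lx: "length x = Suc k"
  shows "homotopy_op (Suc k) (coboundary F) x + coboundary (homotopy_op k F) x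
    = F x - via_periodic F x"
proof -
  define g where "g = hd x mod n"
  define G where "G = translate g F"
  define z where "z = shift (n - g) x"
  have lz: "length z = Suc k"
    using lx by (simp add: z_def)
  have xz: "shift g z = map (\<lambda>v. v mod n) x"
    unfolding z_def g_def by (rule shift_complement) (simp add: n_pos)
  have "z \<noteq> []"
    using lz by auto
  have "coboundary (homotopy_op k F) x = coboundary (homotopy_op k F) (shift g z)"
    using mod_invariant_coboundary[OF mod_invariant_homotopy_op[of k F]]
    by (simp add: mod_invariant_def xz)
  then have coboundary_eq: "coboundary (homotopy_op k F) x = coboundary (homotopy_op k G) z"
    unfolding G_def by (simp add: coboundary_homotopy_op_shift[OF lz])
  have "prepend0 (translate g (coboundary F)) = (\<lambda>y. G y - coboundary (prepend0 G) y)"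
    by (rule ext) (simp add: coboundary_translate[symmetric] G_def prepend0_coboundary)
  then have "homotopy_op (Suc k) (coboundary F) x
      = (G z - coboundary (prepend0 G) z) -
          (via_periodic G z - via_periodic (coboundary (prepend0 G)) z)
        - (coboundary (homotopy_op k G) z - coboundary (homotopy_op k (coboundary (prepend0 G))) z)"
    by (simp add: Let_def g_def[symmetric] z_def[symmetric] via_periodic_diff homotopy_op_diff
        coboundary_diff)
  moreover note coboundary_eq
  moreover have "G z = F x"
    using F unfolding G_def translate_def xz mod_invariant_def by simp
  moreover have "via_periodic G z = via_periodic F x"
    unfolding G_def via_periodic_shift[OF \<open>z \<noteq> []\<close>, symmetric] xz
    by (simp add: via_periodic_map_mod)
  moreover have "via_periodic (coboundary (prepend0 G)) z - coboundary (prepend0 G) z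
      + coboundary (homotopy_op k (coboundary (prepend0 G))) z = 0"
    using on_coboundaries[OF _ lz, of "prepend0 G"]
    by (simp add: G_def mod_invariant_prepend0 mod_invariant_translate)
  ultimately show ?thesis
    by (simp add: algebra_simps)
qed

lemma homotopy_on_coboundary_0:
  assumes "mod_invariant S" "length z = Suc 0"
  shows "via_periodic (coboundary S) z - coboundary S z + coboundary
      (homotopy_op 0 (coboundary S)) z = 0"
proof -
  obtain a where z: "z = [a]" using assms(2) by (auto simp: length_Suc_conv)
  show ?thesis using via_periodic_singleton[OF mod_invariant_coboundary[OF assms(1)], of a]
      by (simp add: z coboundary_def)
qed

lemma homotopy_on_coboundary_Suc:
  fixes S :: "nat list \<Rightarrow> 'b::comm_ring_1"
  assumes IH: "\<And>(F :: nat list \<Rightarrow> 'b) x. mod_invariant F \<Longrightarrow> length x = Suc k \<Longrightarrow>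
                 homotopy_op (Suc k) (coboundary F) x + coboundary (homotopy_op k F) x = F x -
                     via_periodic F x"
    and nS: "mod_invariant S" and lz: "length z = Suc (Suc k)"
  shows "via_periodic (coboundary S) z - coboundary S z + coboundary
      (homotopy_op (Suc k) (coboundary S)) z = 0"
proof -
  have "coboundary (homotopy_op (Suc k) (coboundary S)) z = coboundary
      (\<lambda>y. (S y - via_periodic S y) - coboundary (homotopy_op k S) y) z"
  proof (rule coboundary_cong)
    fix y :: "nat list" assume "Suc (length y) = length z"
    then have "length y = Suc k" using lz by simp
    then show "homotopy_op (Suc k) (coboundary S) y = (S y - via_periodic S y) - coboundary
        (homotopy_op k S) y"
      using IH[OF nS] by (simp add: algebra_simps)
  qed
  also have "\<dots> = coboundary S z - coboundary (via_periodic S) z"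
    by (simp add: coboundary_diff coboundary_coboundary)
  finally show ?thesis using via_periodic_coboundary[OF lz] by simp
qed

lemma homotopy_formula:
  "mod_invariant F \<Longrightarrow> length x = Suc k \<Longrightarrow> homotopy_op (Suc k) (coboundary F) x + coboundary
      (homotopy_op k F) x = F x - via_periodic F x"
proof (induction k arbitrary: F x)
  case 0
  show ?case by (rule homotopy_formula_step[OF homotopy_on_coboundary_0 0(1) 0(2)])
next
  case (Suc k)
  show ?case by (rule homotopy_formula_step[OF homotopy_on_coboundary_Suc[OF Suc.IH] Suc.prems])
qed

text \<open>Translation-invariant homogeneous cochains are functions of the successive differences
  cdiffs x of the tuple x, i.e. inhomogeneous cochains; psums inverts cdiffs.\<close>

fun cdiffs :: "nat list \<Rightarrow> nat list" where
  "cdiffs (a # b # r) = cdiff a b # cdiffs (b # r)"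
| "cdiffs _ = []"

lemma cdiffs_shift: "cdiffs (shift g x) = cdiffs x"
  by (induction x rule: cdiffs.induct) (simp_all add: cdiff_shift)

lemma cdiffs_map_mod: "cdiffs (map (\<lambda>v. v mod n) x) = cdiffs x"
  by (induction x rule: cdiffs.induct) simp_all

lemma length_cdiffs [simp]: "length (cdiffs x) = length x - 1"
  by (induction x rule: cdiffs.induct) simp_all

lemma cdiffs_Cons2: "y \<noteq> [] \<Longrightarrow> cdiffs (a # y) = cdiff a (hd y) # cdiffs y"
  by (cases y) simp_all

fun psums :: "nat \<Rightarrow> nat list \<Rightarrow> nat list" where
  "psums a [] = [a]"
| "psums a (g # gs) = a # psums ((a + g) mod n) gs"

lemma length_psums [simp]: "length (psums a g) = Suc (length g)"
  by (induction g arbitrary: a) simp_all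

lemma hd_psums [simp]: "hd (psums a g) = a"
  by (cases g) simp_all

lemma psums_ne [simp]: "psums a g \<noteq> []"
  by (cases g) simp_all

lemma cdiffs_psums: "(\<forall>v\<in>set g. v < n) \<Longrightarrow> cdiffs (psums a g) = g"
proof (induction g arbitrary: a)
  case Nil then show ?case by simp
next
  case (Cons v gs)
  then show ?case using cdiff_from[of a v] by (simp add: cdiffs_Cons2)
qed

lemma shift_psums: "shift c (psums a g) = psums ((a + c) mod n) g"
proof (induction g arbitrary: a)
  case Nil then show ?case by simp
next
  case (Cons v gs)
  have "((a + v) mod n + c) mod n = ((a + c) mod n + v) mod n"
  proof -
    have "((a + v) mod n + c) mod n = (a + v + c) mod n" by (rule mod_add_left_eq)
    moreover have "((a + c) mod n + v) mod n = (a + c + v) mod n" by (rule mod_add_left_eq)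
    ultimately show ?thesis by (simp add: add.commute add.left_commute)
  qed
  then show ?case using Cons by simp
qed

lemma psums_cdiffs: "psums (a mod n) (cdiffs (a # r)) = map (\<lambda>v. v mod n) (a # r)"
proof (induction r arbitrary: a)
  case Nil then show ?case by simp
next
  case (Cons b r)
  have "(a mod n + cdiff a b) mod n = b mod n"
  proof -
    have "int ((a mod n + cdiff a b) mod n) =
        (int a mod int n + (int b - int a) mod int n) mod int n"
      by (simp add: zmod_int int_cdiff)
    also have "\<dots> = (int a + (int b - int a)) mod int n" by (simp add: mod_add_eq)
    also have "\<dots> = int (b mod n)" by (simp add: zmod_int)
    finally show ?thesis by simp
  qed
  then show ?case using Cons[of b] by simp
qed

lemma map_mod_psums: "x \<noteq> [] \<Longrightarrow> map (\<lambda>v. v mod n) x = shift (hd x) (psums 0 (cdiffs x))"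
  by (cases x) (simp_all only: shift_psums psums_cdiffs list.sel add_0, simp)

definition shift_invariant :: "(nat list \<Rightarrow> 'b) \<Rightarrow> bool" where
  "shift_invariant F \<longleftrightarrow> (\<forall>h. translate h F = F)"

lemma shift_invariant_eval_psums:
  assumes "shift_invariant F" "mod_invariant F" "x \<noteq> []"
  shows "F x = F (psums 0 (cdiffs x))"
proof -
  have "F x = F (map (\<lambda>v. v mod n) x)" using assms(2) by (simp add: mod_invariant_def)
  also have "\<dots> = translate (hd x) F (psums 0 (cdiffs x))"
    using assms(3) by (simp add: map_mod_psums translate_def)
  also have "\<dots> = F (psums 0 (cdiffs x))" using assms(1) by (simp add: shift_invariant_def)
  finally show ?thesis .
qed

lemma shift_invariant_cdiffs: "shift_invariant (\<lambda>x. \<phi> (cdiffs x))"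
  by (simp add: shift_invariant_def translate_eq cdiffs_shift)

lemma mod_invariant_cdiffs: "mod_invariant (\<lambda>x. \<phi> (cdiffs x))"
  by (simp add: mod_invariant_def cdiffs_map_mod)

definition inhom_d :: "nat \<Rightarrow> (nat list \<Rightarrow> 'b::comm_ring_1) \<Rightarrow> nat list \<Rightarrow> 'b" where
  "inhom_d k \<phi> g = \<phi> (tl g) + (\<Sum>j\<in>{1..k}. (-1)^j * \<phi> (merge n j g)) + (-1)^(Suc k) * \<phi> (butlast g)"

lemma merge_Cons: "1 \<le> j \<Longrightarrow> merge n (Suc j) (u # w) = u # merge n j w"
  by (cases j) (simp_all add: merge_def)

lemma cdiffs_tl: "cdiffs (tl x) = tl (cdiffs x)"
  by (induction x rule: cdiffs.induct) simp_all

lemma cdiffs_butlast: "cdiffs (butlast x) = butlast (cdiffs x)"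
proof (induction x rule: cdiffs.induct)
  case (1 a b r)
  then show ?case by (cases r) (simp_all add: cdiffs_Cons2)
qed simp_all

lemma cdiffs_remove_nth:
  "1 \<le> j \<Longrightarrow> Suc j < length x \<Longrightarrow> cdiffs (remove_nth j x) = merge n j (cdiffs x)"
proof (induction x arbitrary: j rule: cdiffs.induct)
  case (1 a b r)
  show ?case
  proof (cases j)
    case 0 then show ?thesis using 1 by simp
  next
    case (Suc j')
    show ?thesis
    proof (cases j')
      case 0
      then obtain c r' where r: "r = c # r'" using 1 Suc by (cases r) auto
      show ?thesis using Suc 0 by (simp add: r merge_def cdiff_add)
    next
      case (Suc j'')
      have ne: "remove_nth j' (b # r) \<noteq> []" using 1 \<open>j = Suc j'\<close> by (auto simp: remove_nth_def)
      have hdb: "hd (remove_nth j' (b # r)) = b" using Suc by simp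
      have j1: "1 \<le> j'" using Suc by simp
      have ih: "cdiffs (remove_nth j' (b # r)) = merge n j' (cdiffs (b # r))"
        using 1(1)[OF j1] 1(3) \<open>j = Suc j'\<close> by simp
      have "cdiffs (remove_nth j (a # b # r)) = cdiffs (a # remove_nth j' (b # r))"
          using \<open>j = Suc j'\<close> by simp
      also have "\<dots> = cdiff a b # cdiffs (remove_nth j' (b # r))" using ne hdb cdiffs_Cons2 by metis
      also have "\<dots> = cdiff a b # merge n j' (cdiffs (b # r))" using ih by simp
      also have "\<dots> = merge n j (cdiffs (a # b # r))" using \<open>j = Suc j'\<close> j1 by (simp add: merge_Cons)
      finally show ?thesis .
    qed
  qed
qed simp_all

lemma coboundary_cdiffs:
  assumes "length x = Suc (Suc k)"
  shows "coboundary (\<lambda>y. \<phi> (cdiffs y)) x = inhom_d k \<phi> (cdiffs x)"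
proof -
  have "coboundary (\<lambda>y. \<phi> (cdiffs y)) x = (\<Sum>i<Suc (Suc k). (-1)^i * \<phi> (cdiffs (remove_nth i x)))"
    by (simp add: coboundary_def assms)
  also have "\<dots> = \<phi> (cdiffs (remove_nth 0 x)) +
      (\<Sum>i<k. (-1)^(Suc i) * \<phi> (cdiffs (remove_nth (Suc i) x)))
       + (-1)^(Suc k) * \<phi> (cdiffs (remove_nth (Suc k) x))"
    by (subst sum.lessThan_Suc_shift, subst sum.lessThan_Suc) (simp add: algebra_simps)
  also have "\<dots> = inhom_d k \<phi> (cdiffs x)"
  proof -
    obtain a r where x: "x = a # r" using assms by (cases x) auto
    have e0: "cdiffs (remove_nth 0 x) = tl (cdiffs x)"
        by (simp add: x cdiffs_tl[of "a # r", simplified])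
    have e1: "cdiffs (remove_nth (Suc k) x) = butlast (cdiffs x)"
      using remove_nth_last[of x] assms by (simp add: cdiffs_butlast)
    have e2: "(\<Sum>i<k. (-1)^(Suc i) * \<phi> (cdiffs (remove_nth (Suc i) x)))
            = (\<Sum>j\<in>{1..k}. (-1)^j * \<phi> (merge n j (cdiffs x)))"
      by (simp add: sum.atLeast1_atMost_eq cdiffs_remove_nth assms)
    show ?thesis unfolding inhom_d_def e0 e1 e2 ..
  qed
  finally show ?thesis .
qed

lemma one_mod_n [simp]: "Suc 0 mod n = Suc 0" "1 mod n = 1"
  using n2 by simp_all

text \<open>The cocycle w_d representing the generator of the periodic complex in degree d.\<close>

definition gen_cocycle :: "nat list \<Rightarrow> int" where
  "gen_cocycle x = (\<Sum>h<n. comparison_coeff x h)"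

definition gen_cocycle_inhom :: "nat list \<Rightarrow> int" where
  "gen_cocycle_inhom g = gen_cocycle (psums 0 g)"

lemma via_periodic_shift_invariant:
  "shift_invariant F \<Longrightarrow> via_periodic F x = of_int (gen_cocycle x) * to_periodic (length x - 1) F"
  by (simp add: via_periodic_def shift_invariant_def gen_cocycle_def sum_distrib_right)

lemma gen_cocycle_odd: "odd (length x) \<Longrightarrow> gen_cocycle x = carry_prod x"
  unfolding gen_cocycle_def comparison_coeff_def using n_pos by (simp add: sum.delta)

lemma cdiff_alt: "cdiff a h = (h + (n - a mod n)) mod n"
proof -
  have l: "a mod n \<le> n" using n_pos by (simp add: order.strict_implies_order)
  have "int ((h + (n - a mod n)) mod n) = (int h + int n - int a mod int n) mod int n"
    using l by (simp add: zmod_int of_nat_diff)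
  also have "\<dots> = (int h + int n - int a) mod int n" by (rule mod_diff_right_eq)
  also have "\<dots> = ((int h - int a) + int n) mod int n" by (simp add: algebra_simps)
  also have "\<dots> = (int h - int a) mod int n" by (rule mod_add_self2)
  finally show ?thesis by (metis int_cdiff of_nat_eq_iff)
qed

lemma count_cdiff: "m \<le> n \<Longrightarrow> (\<Sum>h<n. if cdiff a h < m then 1 else 0 :: int) = int m"
  unfolding cdiff_alt
  using sum_mod_shift[OF n_pos, of "\<lambda>t. if t < m then 1 else 0 :: int" "n - a mod n"]
      sum_indicator_less[of m n]
  by simp

lemma gen_cocycle_even:
  assumes "length x = Suc (Suc r)" "even r"
  shows "gen_cocycle x = int (cdiff (hd x) (x ! 1)) * carry_prod (tl x)"
proof -
  have fc: "comparison_coeff x h = (if cdiff (hd x) h < cdiff (hd x) (x ! 1) then 1 else 0) *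
      carry_prod (tl x)" for h
    using assms by (simp add: comparison_coeff_def)
  have "gen_cocycle x = (\<Sum>h<n. if cdiff (hd x) h < cdiff (hd x) (x ! 1) then 1 else 0) *
      carry_prod (tl x)"
    unfolding gen_cocycle_def fc by (simp add: sum_distrib_right)
  also have "\<dots> = int (cdiff (hd x) (x ! 1)) * carry_prod (tl x)"
    using count_cdiff[of "cdiff (hd x) (x ! 1)" "hd x"] cdiff_lt[of "hd x" "x ! 1"] by simp
  finally show ?thesis .
qed

lemma gen_cocycle_map_mod: "gen_cocycle (map (\<lambda>v. v mod n) x) = gen_cocycle x"
  unfolding gen_cocycle_def by (rule sum.cong[OF refl]) (simp add: comparison_coeff_map_mod)

lemma carry3_0_Suc: "i < n \<Longrightarrow> carry3 0 i ((i + 1) mod n) = (if i = n - 1 then 1 else 0)"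
proof -
  assume i: "i < n"
  have "cdiff 0 i = i" using i by (simp add: cdiff_0)
  moreover have "cdiff i ((i + 1) mod n) = 1" using cdiff_from[of i 1] n2 by simp
  ultimately show ?thesis unfolding carry3_def carry_def using i by auto
qed

lemma carry3_0_same: "i < n \<Longrightarrow> carry3 0 i i = 0"
  by (simp add: carry3_def carry_def cdiff_0)

lemma to_periodic_carry_prod_step:
  fixes F :: "nat list \<Rightarrow> 'b::comm_ring_1"
  defines "F \<equiv> \<lambda>x. of_int (carry_prod x)"
  assumes IH: "to_periodic (2 * k) F = 1" and i: "i < n"
  shows "to_periodic (Suc (2 * k)) (translate i (prepend0 F)) = (if i = n - 1 then 1 else 0)"
proof -
  have "to_periodic (2 * k) (translate 1 (prepend0 (translate i (prepend0 F))))
      = to_periodic (2 * k) (\<lambda>y. of_int (carry3 0 i ((i + 1) mod n)) * F y)"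
  proof (rule to_periodic_cong)
    fix y :: "nat list" assume "length y = Suc (2 * k)" "hd y = 0"
    then obtain y' where y: "y = 0 # y'"
      by (cases y) auto
    have "carry_prod (((i + 1) mod n) # shift (i + 1) y') = carry_prod y"
      using carry_prod_shift[of "i + 1" "0 # y'"] by (simp add: y)
    then show "translate 1 (prepend0 (translate i (prepend0 F))) y
        = of_int (carry3 0 i ((i + 1) mod n)) * F y"
      using i by (simp add: F_def translate_def prepend0_def y shift_shift add.commute
          mod_add_left_eq del: Suc_0_mod_eq)
  qed
  moreover have "to_periodic (2 * k) (prepend0 (translate i (prepend0 F))) = to_periodic (2 * k)
      (\<lambda>y. 0)"
  proof (rule to_periodic_cong)
    fix y :: "nat list" assume "length y = Suc (2 * k)" "hd y = 0"
    then obtain y' where y: "y = 0 # y'"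
      by (cases y) auto
    show "prepend0 (translate i (prepend0 F)) y = 0"
      using i by (simp add: F_def translate_def prepend0_def y carry3_0_same)
  qed
  ultimately show ?thesis
    using carry3_0_Suc[OF i] IH by (simp add: to_periodic_mult_left to_periodic_zero)
qed

lemma to_periodic_carry_prod:
  "to_periodic (2 * k) (\<lambda>x. of_int (carry_prod x) :: 'b::comm_ring_1) = 1"
proof (induction k)
  case (Suc k)
  have "to_periodic (2 * Suc k) (\<lambda>x. of_int (carry_prod x) :: 'b)
      = (\<Sum>i<n. to_periodic (Suc (2 * k)) (translate i (prepend0 (\<lambda>x. of_int (carry_prod x)))))"
    by simp
  also have "\<dots> = (\<Sum>i<n. if i = n - 1 then 1 else 0)"
    using to_periodic_carry_prod_step[OF Suc.IH] by (intro sum.cong) simp_all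
  also have "\<dots> = 1"
    using n_pos by (simp add: sum.delta)
  finally show ?case .
qed simp

lemma to_periodic_gen_cocycle: "to_periodic d (\<lambda>x. of_int (gen_cocycle x) :: 'b::comm_ring_1) = 1"
proof (cases "even d")
  case True
  then obtain k where d: "d = 2 * k" by blast
  have "to_periodic d (\<lambda>x. of_int (gen_cocycle x) :: 'b) = to_periodic d
      (\<lambda>x. of_int (carry_prod x))"
    by (rule to_periodic_cong) (simp add: gen_cocycle_odd d)
  then show ?thesis by (simp add: d to_periodic_carry_prod)
next
  case False
  then obtain k where d: "d = Suc (2 * k)" by (metis oddE add.commute plus_1_eq_Suc)
  define F where "F = (\<lambda>x. of_int (gen_cocycle x) :: 'b)"
  have a: "to_periodic (2 * k) (translate 1 (prepend0 F)) = 1"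
  proof -
    have "to_periodic (2 * k) (translate 1 (prepend0 F)) = to_periodic (2 * k)
        (\<lambda>x. of_int (carry_prod x))"
    proof (rule to_periodic_cong)
      fix y :: "nat list" assume ly: "length y = Suc (2 * k)" "hd y = 0"
      then obtain y' where y: "y = 0 # y'" by (cases y) auto
      have "gen_cocycle (0 # shift 1 y) = int (cdiff 0 1) * carry_prod (shift 1 y)"
        using gen_cocycle_even[of "0 # shift 1 y" "2 * k"] ly by (simp add: y del: Suc_0_mod_eq)
      also have "\<dots> = carry_prod y"
        using n2 by (simp add: cdiff_0 carry_prod_shift del: Suc_0_mod_eq)
      finally show "translate 1 (prepend0 F) y = of_int (carry_prod y)"
          by (simp add: F_def translate_def prepend0_def)
    qed
    then show ?thesis by (simp add: to_periodic_carry_prod)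
  qed
  have b: "to_periodic (2 * k) (prepend0 F) = 0"
  proof -
    have "to_periodic (2 * k) (prepend0 F) = to_periodic (2 * k) (\<lambda>x. 0)"
    proof (rule to_periodic_cong)
      fix y :: "nat list" assume ly: "length y = Suc (2 * k)" "hd y = 0"
      then obtain y' where y: "y = 0 # y'" by (cases y) auto
      have "gen_cocycle (0 # y) = 0"
        using gen_cocycle_even[of "0 # y" "2 * k"] ly by (simp add: y)
      then show "prepend0 F y = 0" by (simp add: F_def prepend0_def)
    qed
    then show ?thesis by (simp add: to_periodic_zero)
  qed
  show ?thesis using a b by (simp add: d F_def[symmetric])
qed

lemma to_periodic_coboundary_shift_invariant:
  assumes "shift_invariant F" "of_nat n = (0 :: 'b::comm_ring_1)"
  shows "to_periodic (Suc d) (coboundary (F :: nat list \<Rightarrow> 'b)) = 0"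
  using assms unfolding to_periodic_coboundary shift_invariant_def by simp

lemma set_cdiffs: "v \<in> set (cdiffs x) \<Longrightarrow> v < n"
  by (induction x rule: cdiffs.induct) (auto simp: cdiff_lt)

lemma shift_invariant_homotopy_op: "shift_invariant F \<Longrightarrow> shift_invariant (homotopy_op k F)"
  unfolding shift_invariant_def
proof (intro allI ext)
  fix h y assume "\<forall>h. translate h F = F"
  show "translate h (homotopy_op k F) y = homotopy_op k F y"
  proof (cases "y = []")
    case True then show ?thesis by (simp add: translate_def)
  next
    case False then show ?thesis using \<open>\<forall>h. translate h F = F\<close>
        by (simp add: translate_def homotopy_op_shift)
  qed
qed

lemma coboundary_cdiffs_eq_0:
  assumes d: "1 \<le> d"
    and zero: "\<And>g. length g \<noteq> d \<Longrightarrow> \<phi> g = 0"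
    and cocycle: "\<And>g. length g = Suc d \<Longrightarrow> (\<forall>v\<in>set g. v < n) \<Longrightarrow> inhom_d d \<phi> g = 0"
  shows "coboundary (\<lambda>x. \<phi> (cdiffs x)) x = 0"
proof (cases "length x = Suc (Suc d)")
  case True
  then show ?thesis
    unfolding coboundary_cdiffs[OF True] using cocycle[of "cdiffs x"] by (simp add: set_cdiffs)
next
  case False
  have "\<phi> (cdiffs (remove_nth i x)) = 0" if "i < length x" for i
    using that False d by (intro zero) auto
  then show ?thesis
    by (simp add: coboundary_def)
qed

lemma coboundary_shift_invariant_eq_inhom_d:
  assumes "shift_invariant F" "mod_invariant F" "length x = Suc (Suc k)"
  shows "coboundary F x = inhom_d k (\<lambda>g. F (psums 0 g)) (cdiffs x)"
proof -
  have "coboundary F x = coboundary (\<lambda>y. F (psums 0 (cdiffs y))) x"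
    using assms(3) by (intro coboundary_cong shift_invariant_eval_psums[OF assms(1,2)]) auto
  also have "\<dots> = inhom_d k (\<lambda>g. F (psums 0 g)) (cdiffs x)"
    by (rule coboundary_cdiffs[OF assms(3)])
  finally show ?thesis .
qed

lemma inhom_cocycle_decomposition:
  fixes \<phi> :: "nat list \<Rightarrow> 'b::comm_ring_1"
  assumes d: "1 \<le> d"
    and zero: "\<And>g. length g \<noteq> d \<Longrightarrow> \<phi> g = 0"
    and cocycle: "\<And>g. length g = Suc d \<Longrightarrow> (\<forall>v\<in>set g. v < n) \<Longrightarrow> inhom_d d \<phi> g = 0"
  shows "\<exists>\<chi> c. \<forall>g. length g = d \<longrightarrow> (\<forall>v\<in>set g. v < n) \<longrightarrow>
            \<phi> g = of_int (gen_cocycle_inhom g) * c + inhom_d (d - 1) \<chi> g"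
proof -
  define \<Phi> where "\<Phi> = (\<lambda>x. \<phi> (cdiffs x))"
  have invariant: "shift_invariant \<Phi>" "mod_invariant \<Phi>"
    by (simp_all add: \<Phi>_def shift_invariant_cdiffs mod_invariant_cdiffs)
  have "coboundary \<Phi> = (\<lambda>x. 0)"
    unfolding \<Phi>_def using coboundary_cdiffs_eq_0[OF d zero cocycle] by blast
  then have homotopy: "\<Phi> x - via_periodic \<Phi> x = coboundary (homotopy_op d \<Phi>) x"
    if "length x = Suc d" for x
    using homotopy_formula[OF invariant(2) that] by (simp add: homotopy_op_zero)
  define \<chi> where "\<chi> = (\<lambda>g. homotopy_op d \<Phi> (psums 0 g))"
  define c where "c = to_periodic d \<Phi>"
  have "\<phi> g = of_int (gen_cocycle_inhom g) * c + inhom_d (d - 1) \<chi> g"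
    if lg: "length g = d" and sg: "\<forall>v\<in>set g. v < n" for g
  proof -
    define x where "x = psums 0 g"
    have lx: "length x = Suc d"
      by (simp add: x_def lg)
    have "\<Phi> x = \<phi> g"
      by (simp add: \<Phi>_def x_def cdiffs_psums[OF sg])
    moreover have "via_periodic \<Phi> x = of_int (gen_cocycle_inhom g) * c"
      using lg by (simp add: via_periodic_shift_invariant[OF invariant(1)] lx c_def x_def
          gen_cocycle_inhom_def)
    moreover have "coboundary (homotopy_op d \<Phi>) x = inhom_d (d - 1) \<chi> g"
      using coboundary_shift_invariant_eq_inhom_d[OF shift_invariant_homotopy_op[OF invariant(1)]
          mod_invariant_homotopy_op, of x "d - 1"] lx d
      by (simp add: \<chi>_def x_def cdiffs_psums[OF sg])
    ultimately show ?thesis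
      using homotopy[OF lx] by (simp add: algebra_simps)
  qed
  then show ?thesis by blast
qed

text \<open>to_periodic kills coboundaries of invariant cochains when n = 0, but sends w_d to 1.\<close>

lemma gen_cocycle_multiple_inhom_coboundary_eq_0:
  fixes \<psi> :: "nat list \<Rightarrow> 'b::comm_ring_1" and E :: 'b
  assumes char: "of_nat n = (0::'b)" and d: "1 \<le> d"
    and eq: "\<And>g. length g = d \<Longrightarrow> (\<forall>v\<in>set g. v < n) \<Longrightarrow>
               inhom_d (d - 1) \<psi> g = of_int (gen_cocycle_inhom g) * E"
  shows "E = 0"
proof -
  define \<Psi> where "\<Psi> = (\<lambda>x. \<psi> (cdiffs x))"
  have dd: "Suc (d - 1) = d" using d by simp
  have "to_periodic (Suc (d - 1)) (coboundary \<Psi>) = 0"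
    by (rule to_periodic_coboundary_shift_invariant)
        (simp_all add: \<Psi>_def shift_invariant_cdiffs char)
  then have z: "to_periodic d (coboundary \<Psi>) = 0" unfolding dd .
  have "to_periodic d (coboundary \<Psi>) = to_periodic d (\<lambda>x. of_int (gen_cocycle x) * E)"
  proof (rule to_periodic_cong)
    fix y :: "nat list" assume ly: "length y = Suc d" and hy: "hd y = 0"
    then obtain r where y: "y = 0 # r"
      by (cases y) auto
    have "coboundary \<Psi> y = inhom_d (d - 1) \<psi> (cdiffs y)"
      unfolding \<Psi>_def by (rule coboundary_cdiffs) (use ly d in simp)
    also have "\<dots> = of_int (gen_cocycle_inhom (cdiffs y)) * E"
      by (rule eq) (auto simp: ly set_cdiffs)
    also have "gen_cocycle_inhom (cdiffs y) = gen_cocycle y"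
      using psums_cdiffs[of 0 r] gen_cocycle_map_mod[of "0 # r"]
          by (simp add: gen_cocycle_inhom_def y)
    finally show "coboundary \<Psi> y = of_int (gen_cocycle y) * E" .
  qed
  also have "\<dots> = E"
    by (simp add: to_periodic_mult_right to_periodic_gen_cocycle)
  finally show ?thesis using z by simp
qed

end

section \<open>Reduction modulo \<sigma>^n - 1\<close>

lemma smult_sum_right: "smult c (\<Sum>i\<in>S. f i) = (\<Sum>i\<in>S. smult c (f i))"
  by (induction S rule: infinite_finite_induct) (simp_all add: smult_add_right)

lemma red_alt:
  assumes "degree p < N"
  shows "red n p = (\<Sum>i<N. monom (coeff p i) (i mod n))"
  unfolding red_def
proof (rule sum.mono_neutral_left)
  show "finite {..<N}" by simp
  show "{..degree p} \<subseteq> {..<N}" using assms by auto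
  show "\<forall>i\<in>{..<N} - {..degree p}. monom (coeff p i) (i mod n) = 0"
    by (auto simp: coeff_eq_0)
qed

lemma red_add: "red n (p + q) = red n p + red n q"
proof -
  define N where "N = Suc (max (degree p) (degree q))"
  have "degree (p + q) < N" "degree p < N" "degree q < N"
    unfolding N_def using degree_add_le_max[of p q] by simp_all
  then show ?thesis
    by (simp add: red_alt[where N = N] sum.distrib add_monom[symmetric])
qed

lemma red_smult: "red n (smult c p) = smult c (red n p)"
proof -
  have "degree (smult c p) < Suc (degree p)"
    using degree_smult_le[of c p] by simp
  then show ?thesis
    by (simp only: red_alt[where N = "Suc (degree p)"] lessI smult_sum_right smult_monom
        coeff_smult)
qed

lemma red_zero [simp]: "red n 0 = 0"
  by (simp add: red_def)

lemma red_uminus: "red n (- p) = - red n p"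
  using red_smult[of n "-1" p] by simp

lemma red_diff: "red n (p - q) = red n p - red n q"
  using red_add[of n p "- q"] red_uminus[of n q] by simp

lemma red_sum: "red n (\<Sum>i\<in>S. f i) = (\<Sum>i\<in>S. red n (f i))"
  by (induction S rule: infinite_finite_induct) (simp_all add: red_add)

lemma red_of_int_mult: "red n (of_int z * p) = of_int z * red n p"
  by (simp add: of_int_poly red_smult)

lemma red_of_nat_mult: "red n (of_nat z * p) = of_nat z * red n p"
  by (simp add: of_nat_poly red_smult)

lemma red_neg1_power_mult: "red n ((-1) ^ j * p) = (-1) ^ j * red n p"
  by (cases "even j") (simp_all add: red_uminus)

lemma red_monom: "red n (monom a i) = monom a (i mod n)"
proof -
  have "red n (monom a i) = (\<Sum>j<Suc i. monom (coeff (monom a i) j) (j mod n))"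
    by (rule red_alt) (simp add: le_less_trans[OF degree_monom_le])
  also have "\<dots> = (\<Sum>j<Suc i. if j = i then monom a (i mod n) else 0)"
    by (rule sum.cong) auto
  finally show ?thesis by simp
qed

lemma red_one: "red n (1 :: 'a::comm_ring_1 poly) = 1"
  using red_monom[of n "1::'a" 0] by simp

lemma sig_eq_red: "sig n i = red n (monom 1 i)"
  by (simp add: sig_def red_monom)

lemma red_monom_mult_mod: "red n (monom a i * q) = red n (monom a (i mod n) * q)"
proof -
  have "red n (monom a k * q) = (\<Sum>j\<le>degree q. monom (a * coeff q j) ((k + j) mod n))" for k
    by (subst poly_as_sum_of_monoms[of q, symmetric])
      (simp add: sum_distrib_left mult_monom red_sum red_monom)
  then show ?thesis
    by (simp add: mod_add_left_eq)
qed

lemma red_mult_monom_cong: "a mod n = b mod n \<Longrightarrow> red n (p * monom c a) = red n (p * monom c b)"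
  using red_monom_mult_mod[of n c a p] red_monom_mult_mod[of n c b p] by (simp add: mult.commute)

lemma red_mult_sig: "red n (p * sig n i) = red n (p * monom 1 i)"
  unfolding sig_def by (rule red_mult_monom_cong) simp

lemma red_mult_red_left: "red n (red n p * q) = red n (p * q)"
proof -
  have "red n (red n p * q) = (\<Sum>i\<le>degree p. red n (monom (coeff p i) (i mod n) * q))"
    unfolding red_def[of n p] by (simp add: sum_distrib_right red_sum)
  also have "\<dots> = (\<Sum>i\<le>degree p. red n (monom (coeff p i) i * q))"
    by (simp add: red_monom_mult_mod[symmetric])
  also have "\<dots> = red n ((\<Sum>i\<le>degree p. monom (coeff p i) i) * q)"
    by (simp add: sum_distrib_right red_sum)
  also have "\<dots> = red n (p * q)"
    by (simp add: poly_as_sum_of_monoms)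
  finally show ?thesis .
qed

lemma red_mult_red_right: "red n (p * red n q) = red n (p * q)"
  using red_mult_red_left[of n q p] by (simp add: mult.commute)

lemma red_in_Acar:
  assumes "0 < n"
  shows "red n p \<in> Acar n"
proof -
  have "coeff (red n p) i = 0" if "n \<le> i" for i
  proof -
    have "coeff (monom (coeff p j) (j mod n)) i = 0" for j
      using assms that mod_less_divisor[OF assms, of j] by simp
    then show ?thesis
      by (simp add: red_def coeff_sum)
  qed
  then show ?thesis
    by (simp add: Acar_def)
qed

lemma Acar_degree:
  assumes "p \<in> Acar n" "p \<noteq> 0"
  shows "degree p < n"
proof (rule ccontr)
  assume "\<not> degree p < n"
  then have "coeff p (degree p) = 0"
    using assms(1) by (simp add: Acar_def)
  then show False
    using assms(2) by simp
qed

lemma red_Acar: "p \<in> Acar n \<Longrightarrow> red n p = p"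
proof (cases "p = 0")
  case False
  assume A: "p \<in> Acar n"
  have "degree p < n"
    using Acar_degree[OF A False] .
  then have "red n p = (\<Sum>i\<le>degree p. monom (coeff p i) i)"
    unfolding red_def by (intro sum.cong) auto
  then show ?thesis
    by (simp add: poly_as_sum_of_monoms)
qed simp

lemma red_rotate_back:
  assumes "p \<in> Acar n" "(a + b) mod n = 0"
  shows "red n (red n (p * monom 1 a) * monom 1 b) = p"
proof -
  have "red n (red n (p * monom 1 a) * monom 1 b) = red n (p * monom 1 (a + b))"
    by (simp add: red_mult_red_left mult_monom mult.assoc)
  also have "\<dots> = red n (p * monom 1 0)"
    by (rule red_mult_monom_cong) (simp add: assms(2))
  finally show ?thesis
    using assms(1) by (simp add: red_Acar)
qed

lemma Acar_0 [simp]: "0 \<in> Acar n"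
  by (simp add: Acar_def)

lemma Acar_add: "p \<in> Acar n \<Longrightarrow> q \<in> Acar n \<Longrightarrow> p + q \<in> Acar n"
  by (simp add: Acar_def)

lemma Acar_diff: "p \<in> Acar n \<Longrightarrow> q \<in> Acar n \<Longrightarrow> p - q \<in> Acar n"
  by (simp add: Acar_def)

lemma Acar_of_int_mult: "p \<in> Acar n \<Longrightarrow> of_int z * p \<in> Acar n"
  by (simp add: of_int_poly Acar_def)

lemma Acar_neg1_power_mult: "p \<in> Acar n \<Longrightarrow> (-1) ^ j * p \<in> Acar n"
  by (cases "even j") (simp_all add: Acar_def)

lemma Acar_sum: "(\<And>i. i \<in> S \<Longrightarrow> f i \<in> Acar n) \<Longrightarrow> (\<Sum>i\<in>S. f i) \<in> Acar n"
  by (induction S rule: infinite_finite_induct) (simp_all add: Acar_add)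

lemma coeff_sum_monom_lessThan: "coeff (\<Sum>i<N. monom (c i) i) j = (if j < N then c j else 0)"
  by (simp add: coeff_sum)

lemma sum_monom_coeff_Acar: "p \<in> Acar n \<Longrightarrow> (\<Sum>i<n. monom (coeff p i) i) = p"
  by (rule poly_eqI) (simp add: coeff_sum_monom_lessThan Acar_def)

lemma sum_monom_in_Acar: "(\<Sum>i<n. monom (c i) i) \<in> Acar n"
  by (simp add: Acar_def coeff_sum_monom_lessThan)

section \<open>Hochschild cochains as twisted inhomogeneous cochains\<close>

lemma idx_iff: "g \<in> idx n k \<longleftrightarrow> length g = k \<and> (\<forall>v\<in>set g. v < n)"
  by (auto simp: idx_def)

lemma idx_Suc_nonempty: "g \<in> idx n (Suc k) \<Longrightarrow> g \<noteq> []"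
  by (auto simp: idx_def)

lemma idx_tl: "g \<in> idx n (Suc k) \<Longrightarrow> tl g \<in> idx n k"
  by (cases g) (auto simp: idx_def)

lemma idx_butlast: "g \<in> idx n (Suc k) \<Longrightarrow> butlast g \<in> idx n k"
  by (auto simp: idx_def dest: in_set_butlastD)

lemma idx_merge: "g \<in> idx n (Suc k) \<Longrightarrow> 1 \<le> j \<Longrightarrow> j \<le> k \<Longrightarrow> 0 < n \<Longrightarrow> merge n j g \<in> idx n k"
  unfolding idx_def merge_def by (auto dest: in_set_takeD in_set_dropD)

lemma idx_take_drop:
  assumes "g \<in> idx n (k + l)"
  shows "take k g \<in> idx n k" "drop k g \<in> idx n l"
  using assms by (auto simp: idx_def dest: in_set_takeD in_set_dropD)

lemma idx_2_cases: "g \<in> idx n 2 \<Longrightarrow> \<exists>a b. g = [a, b] \<and> a < n \<and> b < n"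
  by (auto simp: idx_def numeral_2_eq_2 length_Suc_conv)

lemma idx_3_cases: "g \<in> idx n 3 \<Longrightarrow> \<exists>a b c. g = [a, b, c] \<and> a < n \<and> b < n \<and> c < n"
  by (auto simp: idx_def numeral_3_eq_3 length_Suc_conv)

lemma sum_list_merge:
  assumes "1 \<le> j" "j < length g"
  shows "sum_list (merge n j g) mod n = sum_list g mod n"
proof -
  have "g = take (j - 1) g @ g ! (j - 1) # g ! j # drop (j + 1) g"
    using assms by (metis Cons_nth_drop_Suc Suc_eq_plus1 Suc_pred' append_take_drop_id
        less_imp_diff_less less_le_trans zero_less_one)
  then have "sum_list g = sum_list (take (j - 1) g) + (g ! (j - 1) + g ! j) + sum_list
      (drop (j + 1) g)"
    by (metis add.assoc sum_list.Cons sum_list_append)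
  then show ?thesis
    unfolding merge_def by (simp add: mod_add_left_eq mod_add_right_eq add.assoc)
      (metis mod_add_left_eq mod_add_right_eq add.assoc)
qed

lemma hoch_d_diff: "hoch_d n k (\<lambda>x. u x - v x) = (\<lambda>x. hoch_d n k u x - hoch_d n k v x)"
  by (rule ext) (simp add: hoch_d_def red_diff ring_distribs sum_subtractf)

lemma cochains_diff: "u \<in> cochains n k \<Longrightarrow> v \<in> cochains n k \<Longrightarrow> (\<lambda>x. u x - v x) \<in> cochains n k"
  by (simp add: cochains_def Acar_diff)

lemma coboundaries_diff:
  assumes "u \<in> coboundaries n k" "v \<in> coboundaries n k"
  shows "(\<lambda>x. u x - v x) \<in> coboundaries n k"
proof (cases "k = 0")
  case False
  then obtain u' v' where "u' \<in> cochains n (k - 1)" "v' \<in> cochains n (k - 1)"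
    "u = hoch_d n (k - 1) u'" "v = hoch_d n (k - 1) v'"
    using assms by (auto simp: coboundaries_def)
  then have "(\<lambda>x. u x - v x) = hoch_d n (k - 1) (\<lambda>x. u' x - v' x)"
    "(\<lambda>x. u' x - v' x) \<in> cochains n (k - 1)"
    by (simp_all add: hoch_d_diff cochains_diff)
  then show ?thesis
    using False by (simp add: coboundaries_def)
qed (use assms in \<open>simp add: coboundaries_def\<close>)

lemma cohom_refl: "cohom n k f (f :: nat list \<Rightarrow> 'a::comm_ring_1 poly)"
proof -
  have "hoch_d n (k - 1) (\<lambda>_. 0 :: 'a poly) = (\<lambda>_. 0)" "(\<lambda>_. 0 :: 'a poly) \<in> cochains n (k - 1)"
    by (simp_all add: hoch_d_def cochains_def fun_eq_iff)
  then show ?thesis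
    unfolding cohom_def coboundaries_def by (auto simp: image_iff intro!: bexI[of _ "\<lambda>_. 0"])
qed

lemma cohom_coboundary_diff:
  "cohom n k f g \<Longrightarrow> cohom n k f h \<Longrightarrow> (\<lambda>x. h x - g x) \<in> coboundaries n k"
  unfolding cohom_def using coboundaries_diff[of "\<lambda>x. f x - g x" n k "\<lambda>x. f x - h x"] by simp

context cyclic
begin

definition twist :: "nat \<Rightarrow> (nat list \<Rightarrow> 'a::comm_ring_1 poly) \<Rightarrow> nat list \<Rightarrow> 'a poly" where
  "twist k \<phi> g = (if g \<in> idx n k then red n (\<phi> g * monom 1 (sum_list g)) else 0)"

definition untwist :: "nat \<Rightarrow> (nat list \<Rightarrow> 'a::comm_ring_1 poly) \<Rightarrow> nat list \<Rightarrow> 'a poly" where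
  "untwist k f g = (if g \<in> idx n k then red n (f g * monom 1 (n - sum_list g mod n)) else 0)"

lemma twist_cochain: "twist k \<phi> \<in> cochains n k"
  unfolding cochains_def by (auto simp: twist_def red_in_Acar[OF n_pos])

lemma untwist_Acar: "untwist k f g \<in> Acar n"
  by (auto simp: untwist_def red_in_Acar[OF n_pos])

lemma untwist_length: "length g \<noteq> k \<Longrightarrow> untwist k f g = 0"
  by (simp add: untwist_def idx_def)

lemma mod_complement_add: "(n - s mod n + s) mod n = 0" "(s + (n - s mod n)) mod n = 0"
proof -
  have "s mod n < n"
    using n_pos by simp
  then have "n - s mod n + s = n + (s - s mod n)"
    by simp
  also have "s - s mod n = n * (s div n)"
    by (simp add: minus_mod_eq_mult_div)
  finally show "(n - s mod n + s) mod n = 0" "(s + (n - s mod n)) mod n = 0"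
    by (simp_all add: add.commute)
qed

lemma twist_untwist:
  assumes "f \<in> cochains n k"
  shows "twist k (untwist k f) = f"
proof (rule ext)
  fix g
  have "f g \<in> Acar n" "g \<notin> idx n k \<Longrightarrow> f g = 0"
    using assms by (simp_all add: cochains_def)
  then show "twist k (untwist k f) g = f g"
    by (simp add: twist_def untwist_def red_rotate_back mod_complement_add(1))
qed

lemma twist_cong: "(\<And>g. g \<in> idx n k \<Longrightarrow> \<phi> g = \<psi> g) \<Longrightarrow> twist k \<phi> = twist k \<psi>"
  by (rule ext) (simp add: twist_def)

lemma twist_red_cong:
  assumes "\<And>g. g \<in> idx n k \<Longrightarrow> red n (\<phi> g) = red n (\<psi> g)"
  shows "twist k \<phi> = twist k \<psi>"
proof (rule ext)
  fix g
  show "twist k \<phi> g = twist k \<psi> g"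
  proof (cases "g \<in> idx n k")
    case True
    then have "red n (\<phi> g * M) = red n (\<psi> g * M)" for M
      using assms red_mult_red_left[of n "\<phi> g" M] red_mult_red_left[of n "\<psi> g" M] by metis
    then show ?thesis
      by (simp add: twist_def)
  qed (simp add: twist_def)
qed

lemma twist_eq_imp_eq:
  assumes "twist k \<phi> = twist k \<psi>" "g \<in> idx n k" "\<phi> g \<in> Acar n" "\<psi> g \<in> Acar n"
  shows "\<phi> g = \<psi> g"
proof -
  define s where "s = sum_list g"
  have eq: "red n (\<phi> g * monom 1 s) = red n (\<psi> g * monom 1 s)"
    using fun_cong[OF assms(1), of g] assms(2) by (simp add: twist_def s_def)
  have "\<phi> g = red n (red n (\<phi> g * monom 1 s) * monom 1 (n - s mod n))"
    by (rule red_rotate_back[OF assms(3) mod_complement_add(2), symmetric])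
  also have "\<dots> = \<psi> g"
    unfolding eq by (rule red_rotate_back[OF assms(4) mod_complement_add(2)])
  finally show ?thesis .
qed

lemma twist_diff: "(\<lambda>g. twist k \<phi> g - twist k \<psi> g) = twist k (\<lambda>g. \<phi> g - \<psi> g)"
  by (rule ext) (simp add: twist_def ring_distribs red_diff)

lemma twist_of_nat_mult: "(\<lambda>g. of_nat c * twist k \<phi> g) = twist k (\<lambda>g. of_nat c * \<phi> g)"
  by (rule ext) (simp add: twist_def red_of_nat_mult mult.assoc)

lemma twist_0: "twist 0 \<phi> = (\<lambda>g. if g = [] then red n (\<phi> []) else 0)"
  by (rule ext) (simp add: twist_def idx_def)

lemma twist_mult_monom_cong:
  assumes "a mod n = b mod n"
  shows "twist k (\<lambda>g. X g * monom 1 a) = twist k (\<lambda>g. X g * monom 1 b)"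
proof (rule ext)
  fix g
  have "red n (X g * monom 1 a * monom 1 (sum_list g)) = red n
      (X g * monom 1 b * monom 1 (sum_list g))"
    using red_mult_monom_cong[OF assms, of "X g * monom 1 (sum_list g)" 1] by (simp add: ac_simps)
  then show "twist k (\<lambda>g. X g * monom 1 a) g = twist k (\<lambda>g. X g * monom 1 b) g"
    by (simp add: twist_def)
qed

lemma cup_twist:
  "cup n k l (twist k \<phi>) (twist l \<psi>) = twist (k + l) (\<lambda>g. \<phi> (take k g) * \<psi> (drop k g))"
proof (rule ext)
  fix g
  show "cup n k l (twist k \<phi>) (twist l \<psi>) g = twist (k + l) (\<lambda>g. \<phi> (take k g) * \<psi> (drop k g)) g"
  proof (cases "g \<in> idx n (k + l)")
    case True
    define u v where "u = take k g" and "v = drop k g"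
    have s: "sum_list g = sum_list u + sum_list v"
      unfolding u_def v_def by (metis append_take_drop_id sum_list_append)
    have "\<phi> u * monom 1 (sum_list u) * (\<psi> v * monom 1 (sum_list v))
        = \<phi> u * \<psi> v * (monom 1 (sum_list u) * monom 1 (sum_list v))"
      by (simp add: ac_simps)
    then have "red n (red n (\<phi> u * monom 1 (sum_list u)) * red n (\<psi> v * monom 1 (sum_list v)))
        = red n (\<phi> u * \<psi> v * monom 1 (sum_list g))"
      by (simp only: red_mult_red_left red_mult_red_right mult_monom s) simp
    then show ?thesis
      using True idx_take_drop[OF True] by (simp add: cup_def twist_def u_def v_def)
  qed (simp add: cup_def twist_def)
qed

lemma hoch_d_twist_apply:
  assumes g: "g \<in> idx n (Suc k)"
  shows "hoch_d n k (twist k \<phi>) g = red n (inhom_d k \<phi> g * monom 1 (sum_list g))"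
proof -
  define M where "M = (monom 1 (sum_list g) :: 'a poly)"
  obtain a r where gar: "g = a # r"
    using idx_Suc_nonempty[OF g] by (cases g) auto
  have "red n (sig n (hd g) * twist k \<phi> (tl g))
      = red n (monom 1 a * red n (\<phi> r * monom 1 (sum_list r)))"
    using idx_tl[OF g] by (simp add: twist_def gar sig_eq_red red_mult_red_left)
  also have "\<dots> = red n (\<phi> r * monom 1 (sum_list r) * monom 1 a)"
    by (simp add: red_mult_red_right mult.commute)
  also have "\<dots> = red n (\<phi> (tl g) * M)"
    by (simp add: M_def gar mult.assoc mult_monom add.commute)
  finally have first_term: "red n (sig n (hd g) * twist k \<phi> (tl g)) = red n (\<phi> (tl g) * M)" .
  have middle_terms: "twist k \<phi> (merge n j g) = red n (\<phi> (merge n j g) * M)" if j: "j \<in>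
      {1..k}" for j
  proof -
    have "merge n j g \<in> idx n k"
      using j g by (intro idx_merge n_pos) auto
    moreover have "length g = Suc k"
      using g by (simp add: idx_def)
    ultimately show ?thesis
      unfolding twist_def M_def using j by (simp, intro red_mult_monom_cong sum_list_merge) auto
  qed
  have "sum_list g = sum_list (butlast g) + last g"
    using idx_Suc_nonempty[OF g] by (metis append_butlast_last_id sum_list_append sum_list_simps
        add_0_right)
  then have last_term: "red n (twist k \<phi> (butlast g) * sig n (last g)) = red n (\<phi> (butlast g) * M)"
    using idx_butlast[OF g]
    by (simp add: twist_def red_mult_sig red_mult_red_left M_def mult_monom mult.assoc)
  have "hoch_d n k (twist k \<phi>) g = red n (\<phi> (tl g) * M)
      + (\<Sum>j\<in>{1..k}. (-1)^j * red n (\<phi> (merge n j g) * M))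
      + (-1)^(Suc k) * red n (\<phi> (butlast g) * M)"
    using g by (simp add: hoch_d_def first_term middle_terms last_term)
  also have "\<dots> = red n (inhom_d k \<phi> g * M)"
    by (simp add: inhom_d_def ring_distribs red_add red_sum sum_distrib_right red_neg1_power_mult
        mult.assoc del: power_Suc)
  finally show ?thesis
    by (simp add: M_def)
qed

lemma hoch_d_twist: "hoch_d n k (twist k \<phi>) = twist (Suc k) (inhom_d k \<phi>)"
proof (rule ext)
  fix g
  show "hoch_d n k (twist k \<phi>) g = twist (Suc k) (inhom_d k \<phi>) g"
  proof (cases "g \<in> idx n (Suc k)")
    case True
    then show ?thesis
      by (simp add: hoch_d_twist_apply twist_def)
  qed (simp add: hoch_d_def twist_def)
qed

lemma twist_coboundary: "twist (Suc k) (inhom_d k \<psi>) \<in> coboundaries n (Suc k)"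
  using twist_cochain[of k \<psi>] by (auto simp: coboundaries_def hoch_d_twist[symmetric])

lemma coboundary_twistE:
  assumes "u \<in> coboundaries n (Suc k)"
  obtains \<psi> where "\<And>g. \<psi> g \<in> Acar n" "u = twist (Suc k) (inhom_d k \<psi>)"
proof -
  obtain v where v: "v \<in> cochains n k" "u = hoch_d n k v"
    using assms by (auto simp: coboundaries_def)
  show ?thesis
    by (rule that[of "untwist k v"])
      (simp_all add: untwist_Acar v hoch_d_twist[symmetric] twist_untwist)
qed

lemma twist_cocycle: "(\<And>g. g \<in> idx n (Suc k) \<Longrightarrow> inhom_d k \<phi> g = 0) \<Longrightarrow> twist k \<phi> \<in> cocycles n k"
  unfolding cocycles_def using twist_cochain[of k \<phi>]
  by (simp add: hoch_d_twist fun_eq_iff twist_def)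

lemma inhom_d_Acar: "(\<And>h. \<psi> h \<in> Acar n) \<Longrightarrow> inhom_d k \<psi> g \<in> Acar n"
  unfolding inhom_d_def by (intro Acar_add Acar_sum Acar_neg1_power_mult) auto

end

context cyclic
begin

definition y_inhom :: "nat list \<Rightarrow> 'a::comm_ring_1 poly" where
  "y_inhom g = of_nat (hd g) * monom 1 (n - 1)"

definition z_inhom :: "nat list \<Rightarrow> 'a::comm_ring_1 poly" where
  "z_inhom g = of_int (carry (g ! 0) (g ! 1))"

fun carry_prod_inhom :: "nat list \<Rightarrow> int" where
  "carry_prod_inhom (a # b # r) = carry a b * carry_prod_inhom r"
| "carry_prod_inhom _ = 1"

lemma gx_twist: "gx n = twist 0 (\<lambda>_. monom 1 1)"
  by (rule ext) (simp add: twist_0 gx_def sig_eq_red)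

lemma cone_twist: "(cone :: nat list \<Rightarrow> 'a::comm_ring_1 poly) = twist 0 (\<lambda>_. 1)"
  by (rule ext) (simp add: twist_0 cone_def red_one)

lemma gy_twist: "gy n = (twist 1 y_inhom :: nat list \<Rightarrow> 'a::comm_ring_1 poly)"
proof (rule ext)
  fix g
  show "gy n g = (twist 1 y_inhom g :: 'a poly)"
  proof (cases "g \<in> idx n 1")
    case True
    then obtain a where g: "g = [a]"
      by (auto simp: idx_def length_Suc_conv)
    have "red n (of_nat a * monom 1 (n - 1) * monom 1 a) =
        (of_nat a * sig n (a + n - 1) :: 'a poly)"
      using n_pos by (simp add: red_of_nat_mult mult.assoc mult_monom red_monom sig_def add.commute)
    then show ?thesis
      using True by (simp add: gy_def twist_def y_inhom_def g)
  qed (simp add: gy_def twist_def)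
qed

lemma gz_twist: "gz n = (twist 2 z_inhom :: nat list \<Rightarrow> 'a::comm_ring_1 poly)"
proof (rule ext)
  fix g
  show "gz n g = (twist 2 z_inhom g :: 'a poly)"
  proof (cases "g \<in> idx n 2")
    case True
    then obtain a b where g: "g = [a, b]"
      using idx_2_cases by blast
    show ?thesis
      using True by (simp add: gz_def twist_def z_inhom_def g carry_def red_monom sig_def)
  qed (simp add: gz_def twist_def)
qed

lemma cpow_gx: "cpow n 0 (gx n) i = (twist 0 (\<lambda>_. monom 1 i) :: nat list \<Rightarrow> 'a::comm_ring_1 poly)"
proof (induction i)
  case 0
  then show ?case
    by (simp add: cone_twist)
next
  case (Suc i)
  then show ?case
    by (simp add: gx_twist cup_twist mult_monom)
qed

lemma cpow_gy_1: "cpow n 1 (gy n) 1 = (twist 1 y_inhom :: nat list \<Rightarrow> 'a::comm_ring_1 poly)"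
  by (simp add: gy_twist cone_twist cup_twist) (rule twist_cong, auto simp: idx_def)

lemma cpow_gy_2:
  "cpow n 1 (gy n) 2
     = (twist 2 (\<lambda>g. of_nat (g ! 0) * of_nat (g ! 1) * monom 1 (n - 2)) :: nat list \<Rightarrow>
         'a::comm_ring_1 poly)"
proof -
  have "cpow n 1 (gy n) 2 = (cup n 1 1 (gy n) (cpow n 1 (gy n) 1) :: nat list \<Rightarrow> 'a poly)"
    by (simp add: numeral_2_eq_2)
  also have "\<dots> = cup n 1 1 (twist 1 y_inhom) (twist 1 y_inhom)"
    unfolding cpow_gy_1 by (simp only: gy_twist)
  also have "\<dots> = twist 2 (\<lambda>g. of_nat (g ! 0) * of_nat (g ! 1) * monom 1 ((n - 1) + (n - 1)))"
    unfolding cup_twist one_add_one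
  proof (rule twist_cong)
    fix g :: "nat list" assume "g \<in> idx n 2"
    then obtain a b where "g = [a, b]"
      using idx_2_cases by blast
    then show "y_inhom (take 1 g) * y_inhom (drop 1 g)
        = (of_nat (g ! 0) * of_nat (g ! 1) * monom 1 ((n - 1) + (n - 1)) :: 'a poly)"
      by (simp add: y_inhom_def mult_monom ac_simps)
  qed
  also have "\<dots> = twist 2 (\<lambda>g. of_nat (g ! 0) * of_nat (g ! 1) * monom 1 (n - 2))"
  proof (rule twist_mult_monom_cong)
    have "(n - 1) + (n - 1) = (n - 2) + n"
      using n2 by simp
    then show "((n - 1) + (n - 1)) mod n = (n - 2) mod n"
      by simp
  qed
  finally show ?thesis .
qed

lemma cpow_gz:
  "cpow n 2 (gz n) k =
      (twist (2 * k) (\<lambda>g. of_int (carry_prod_inhom g)) :: nat list \<Rightarrow> 'a::comm_ring_1 poly)"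
proof (induction k)
  case 0
  have "twist 0 (\<lambda>g. of_int (carry_prod_inhom g)) = (twist 0 (\<lambda>_. 1) :: nat list \<Rightarrow> 'a poly)"
    by (rule twist_cong) (simp add: idx_def)
  then show ?case
    by (simp add: cone_twist)
next
  case (Suc k)
  have "cpow n 2 (gz n) (Suc k)
      = (cup n 2 (2 * k) (twist 2 z_inhom) (twist (2 * k) (\<lambda>g. of_int (carry_prod_inhom g)))
          :: nat list \<Rightarrow> 'a poly)"
    unfolding cpow.simps Suc.IH by (simp add: gz_twist)
  also have "\<dots> = twist (2 * Suc k) (\<lambda>g. of_int (carry_prod_inhom g))"
    unfolding cup_twist mult_Suc_right
  proof (rule twist_cong)
    fix g assume "g \<in> idx n (2 + 2 * k)"
    then obtain a b r where "g = a # b # r"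
      by (auto simp: idx_def length_Suc_conv)
    then show "z_inhom (take 2 g) * of_int (carry_prod_inhom (drop 2 g))
        = (of_int (carry_prod_inhom g) :: 'a poly)"
      by (simp add: z_inhom_def)
  qed
  finally show ?case .
qed

lemma psums_nth_0 [simp]: "psums a g ! 0 = a"
  by (cases g) simp_all

lemma carry_prod_3_psums: "carry_prod (a # b # psums c g) = carry3 a b c * carry_prod (psums c g)"
  by (cases g) simp_all

lemma carry_prod_psums: "\<forall>v\<in>set g. v < n \<Longrightarrow> carry_prod (psums a g) = carry_prod_inhom g"
proof (induction g arbitrary: a rule: carry_prod_inhom.induct)
  case (1 u v r)
  have "carry3 a ((a + u) mod n) (((a + u) mod n + v) mod n) = carry u v"
    using 1(2) cdiff_from[of a u] cdiff_from[of "(a + u) mod n" v] by (simp add: carry3_def)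
  then show ?case
    using 1 by (simp add: carry_prod_3_psums)
qed simp_all

lemma gen_cocycle_inhom_even: "g \<in> idx n d \<Longrightarrow> even d \<Longrightarrow> gen_cocycle_inhom g = carry_prod_inhom g"
  by (simp add: gen_cocycle_inhom_def gen_cocycle_odd idx_iff carry_prod_psums)

lemma gen_cocycle_inhom_odd:
  assumes "g \<in> idx n d" "odd d"
  shows "gen_cocycle_inhom g = int (hd g) * carry_prod_inhom (tl g)"
proof -
  obtain u r where g: "g = u # r"
    using assms by (cases g) (auto simp: idx_def)
  have u: "u < n" and r: "\<forall>v\<in>set r. v < n" and lr: "even (length r)"
    using assms by (auto simp: idx_def g)
  have "gen_cocycle_inhom g = int (cdiff 0 u) * carry_prod (psums u r)"
    using gen_cocycle_even[of "psums 0 g" "length r"] lr u by (simp add: gen_cocycle_inhom_def g)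
  then show ?thesis
    using u r by (simp add: cdiff_0 carry_prod_psums g)
qed

text \<open>y contributes the factor \<sigma>^(n-1) in odd degree.\<close>

definition offset :: "nat \<Rightarrow> nat" where
  "offset e = (if e = 1 then n - 1 else 0)"

lemma mono_twist:
  assumes "e \<le> 1"
  shows "mono n i e k = (twist (e + 2 * k)
    (\<lambda>g. monom 1 i * of_int (gen_cocycle_inhom g) * monom 1 (offset e)) :: nat list \<Rightarrow>
        'a::comm_ring_1 poly)"
proof (cases "e = 0")
  case True
  have "mono n i e k = (cup n 0 (2 * k) (twist 0 (\<lambda>_. monom 1 i))
      (cup n 0 (2 * k) (twist 0 (\<lambda>_. 1)) (twist (2 * k) (\<lambda>g. of_int (carry_prod_inhom g))))
        :: nat list \<Rightarrow> 'a poly)"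
    unfolding mono_def True by (simp add: cpow_gx cpow_gz cone_twist)
  also have "\<dots> = twist (2 * k) (\<lambda>g. monom 1 i * of_int (carry_prod_inhom g))"
    by (simp add: cup_twist)
  also have "\<dots> = twist (e + 2 * k)
      (\<lambda>g. monom 1 i * of_int (gen_cocycle_inhom g) * monom 1 (offset e))"
    unfolding True by (simp, rule twist_cong) (simp add: gen_cocycle_inhom_even offset_def)
  finally show ?thesis .
next
  case False
  then have e: "e = 1"
    using assms by simp
  have "mono n i e k = (cup n 0 (1 + 2 * k) (twist 0 (\<lambda>_. monom 1 i))
      (cup n 1 (2 * k) (twist 1 y_inhom) (twist (2 * k) (\<lambda>g. of_int (carry_prod_inhom g))))
        :: nat list \<Rightarrow> 'a poly)"
    unfolding mono_def e cpow_gx cpow_gz cpow_gy_1 by simp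
  also have "\<dots> = twist (0 + (1 + 2 * k))
      (\<lambda>g. monom 1 i *
          (y_inhom (take 1 (drop 0 g)) * of_int (carry_prod_inhom (drop 1 (drop 0 g)))))"
    unfolding cup_twist[of 1 "2 * k"] by (rule cup_twist)
  also have "\<dots> = twist (e + 2 * k)
      (\<lambda>g. monom 1 i * of_int (gen_cocycle_inhom g) * monom 1 (offset e))"
    unfolding e add_0
  proof (rule twist_cong)
    fix g :: "nat list" assume g: "g \<in> idx n (1 + 2 * k)"
    then obtain u r where gu: "g = u # r"
      by (cases g) (auto simp: idx_def)
    have "gen_cocycle_inhom g = int u * carry_prod_inhom r"
      using gen_cocycle_inhom_odd[OF g] by (simp add: gu)
    then show "monom 1 i *
        (y_inhom (take 1 (drop 0 g)) * of_int (carry_prod_inhom (drop 1 (drop 0 g))))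
        = (monom 1 i * of_int (gen_cocycle_inhom g) * monom 1 (offset 1) :: 'a poly)"
      by (simp add: gu y_inhom_def offset_def ac_simps)
  qed
  finally show ?thesis .
qed

lemma basis_combination_twist:
  assumes "e \<le> 1"
  shows "csum {..<n} (\<lambda>i. csmult (c i) (mono n i e k)) = (twist (e + 2 * k)
    (\<lambda>g. (\<Sum>i<n. monom (c i) i) * of_int (gen_cocycle_inhom g) * monom 1 (offset e))
      :: nat list \<Rightarrow> 'a::comm_ring_1 poly)"
proof (rule ext)
  fix g
  show "csum {..<n} (\<lambda>i. csmult (c i) (mono n i e k)) g = twist (e + 2 * k)
    (\<lambda>g. (\<Sum>i<n. monom (c i) i) * of_int (gen_cocycle_inhom g) * monom 1 (offset e)) g"
    by (cases "g \<in> idx n (e + 2 * k)")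
      (simp_all add: csum_def csmult_def mono_twist[OF assms] twist_def red_smult red_sum
        sum_distrib_right smult_monom_mult mult.assoc flip: red_smult)
qed

end

section \<open>A basis of HH^d\<close>

context cyclic
begin

lemma gen_cocycle_inhom_Nil: "gen_cocycle_inhom [] = 1"
  using gen_cocycle_inhom_even[of "[]" 0] by (simp add: idx_def)

lemma red_gen_multiple:
  assumes "(a + b) mod n = 0"
  shows "red n (red n (c * monom 1 a) * of_int w * monom 1 b) = red n (of_int w * c)"
proof -
  have "red n (c * monom 1 a) * of_int w * monom 1 b = of_int w *
      (red n (c * monom 1 a) * monom 1 b)"
    by (simp add: ac_simps)
  then have "red n (red n (c * monom 1 a) * of_int w * monom 1 b)
      = of_int w * red n (red n (c * monom 1 a) * monom 1 b)"
    by (simp only: red_of_int_mult)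
  also have "red n (red n (c * monom 1 a) * monom 1 b) = red n (c * monom 1 0)"
    using red_mult_monom_cong[of "a + b" n 0 c 1] assms
    by (simp add: red_mult_red_left mult.assoc mult_monom)
  finally show ?thesis
    by (simp add: red_of_int_mult)
qed

lemma basis_combination_eq_gen_multiple:
  "\<exists>c::nat \<Rightarrow> 'a::comm_ring_1. (\<forall>i\<ge>n. c i = 0) \<and>
     csum {..<n} (\<lambda>i. csmult (c i) (mono n i (d mod 2) (d div 2)))
       = twist d (\<lambda>g. of_int (gen_cocycle_inhom g) * c0)"
proof -
  define T where "T = offset (d mod 2)"
  define P where "P = red n (c0 * monom 1 (n - T))"
  define c where "c i = (if i < n then coeff P i else 0)" for i
  have "(\<Sum>i<n. monom (c i) i) = P"
    using sum_monom_coeff_Acar[OF red_in_Acar[OF n_pos]] by (simp add: c_def P_def)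
  then have "csum {..<n} (\<lambda>i. csmult (c i) (mono n i (d mod 2) (d div 2)))
      = twist d (\<lambda>g. P * of_int (gen_cocycle_inhom g) * monom 1 T)"
    using basis_combination_twist[of "d mod 2" c "d div 2"] by (simp add: T_def)
  also have "\<dots> = twist d (\<lambda>g. of_int (gen_cocycle_inhom g) * c0)"
    using red_gen_multiple[of "n - T" T c0]
        by (intro twist_red_cong) (simp add: P_def T_def offset_def)
  finally show ?thesis
    by (intro exI[of _ c] conjI) (simp_all add: c_def)
qed

lemma cocycle_cohom_gen_multiple:
  assumes f: "f \<in> (cocycles n d :: (nat list \<Rightarrow> 'a::comm_ring_1 poly) set)"
  shows "\<exists>c0. cohom n d f (twist d (\<lambda>g. of_int (gen_cocycle_inhom g) * c0))"
proof -
  define \<phi> where "\<phi> = untwist d f"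
  have f\<phi>: "twist d \<phi> = f"
    using f by (simp add: \<phi>_def cocycles_def twist_untwist)
  have \<phi>_Acar: "\<phi> g \<in> Acar n" for g
    by (simp add: \<phi>_def untwist_Acar)
  show ?thesis
  proof (cases d)
    case 0
    have "twist d (\<lambda>g. of_int (gen_cocycle_inhom g) * \<phi> []) = f"
      unfolding f\<phi>[symmetric] 0 by (rule twist_cong) (simp add: idx_def gen_cocycle_inhom_Nil)
    then show ?thesis
      using cohom_refl[of n d f] by (intro exI[of _ "\<phi> []"]) simp
  next
    case (Suc d')
    have "twist (Suc d) (inhom_d d \<phi>) = twist (Suc d) (\<lambda>_. 0)"
      using f by (simp add: cocycles_def f\<phi>[symmetric] hoch_d_twist fun_eq_iff twist_def)
    then have cocycle: "inhom_d d \<phi> g = 0" if "length g = Suc d" "\<forall>v\<in>set g. v < n" for g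
      using that by (intro twist_eq_imp_eq[where k = "Suc d"] inhom_d_Acar \<phi>_Acar)
        (simp_all add: idx_iff)
    obtain \<chi> c0 where decomposition: "\<forall>g. length g = d \<longrightarrow> (\<forall>v\<in>set g. v < n) \<longrightarrow>
        \<phi> g = of_int (gen_cocycle_inhom g) * c0 + inhom_d (d - 1) \<chi> g"
      using inhom_cocycle_decomposition[of d \<phi>] Suc cocycle by (auto simp: \<phi>_def untwist_length)
    have "f = twist d (\<lambda>g. of_int (gen_cocycle_inhom g) * c0 + inhom_d d' \<chi> g)"
      unfolding f\<phi>[symmetric] using decomposition Suc by (intro twist_cong) (simp add: idx_iff)
    then have "(\<lambda>x. f x - twist d (\<lambda>g. of_int (gen_cocycle_inhom g) * c0) x) = twist d
        (inhom_d d' \<chi>)"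
      by (simp add: twist_diff)
    then show ?thesis
      using twist_coboundary[of d' \<chi>] Suc by (intro exI[of _ c0]) (simp add: cohom_def)
  qed
qed

text \<open>Uniqueness needs n = 0 in R: in general HH^(2k) is A/(n \<sigma>^(n-1) A), not A.\<close>

lemma twist_gen_multiple_coboundary_eq_0:
  fixes E :: "'a::comm_ring_1 poly"
  assumes char: "of_nat n = (0 :: 'a poly)" and E: "E \<in> Acar n"
    and coboundary: "twist d (\<lambda>g. of_int (gen_cocycle_inhom g) * E) \<in> coboundaries n d"
  shows "E = 0"
proof (cases d)
  case 0
  then have "twist 0 (\<lambda>g. of_int (gen_cocycle_inhom g) * E) [] = 0"
    using coboundary by (simp add: coboundaries_def)
  then show ?thesis
    using E by (simp add: twist_0 gen_cocycle_inhom_Nil red_Acar)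
next
  case (Suc d')
  obtain \<psi> :: "nat list \<Rightarrow> 'a poly" where \<psi>: "\<And>g. \<psi> g \<in> Acar n"
    "twist d (\<lambda>g. of_int (gen_cocycle_inhom g) * E) = twist d (inhom_d d' \<psi>)"
    using coboundary_twistE[of "twist d (\<lambda>g. of_int (gen_cocycle_inhom g) * E)" d'] coboundary Suc
    by blast
  have "inhom_d (d - 1) \<psi> g = of_int (gen_cocycle_inhom g) * E"
    if "length g = d" "\<forall>v\<in>set g. v < n" for g
    using twist_eq_imp_eq[OF \<psi>(2)[symmetric], of g] that Suc inhom_d_Acar[OF \<psi>(1)]
      Acar_of_int_mult[OF E] by (simp add: idx_iff)
  then show ?thesis
    using gen_cocycle_multiple_inhom_coboundary_eq_0[OF char, of d \<psi> E] Suc by simp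
qed

lemma basis_combination_unique:
  fixes c1 c2 :: "nat \<Rightarrow> 'a::comm_ring_1"
  assumes char: "of_nat n = (0 :: 'a poly)"
    and c1: "\<forall>i\<ge>n. c1 i = 0" and c2: "\<forall>i\<ge>n. c2 i = 0"
    and h1: "cohom n d f (csum {..<n} (\<lambda>i. csmult (c1 i) (mono n i (d mod 2) (d div 2))))"
    and h2: "cohom n d f (csum {..<n} (\<lambda>i. csmult (c2 i) (mono n i (d mod 2) (d div 2))))"
  shows "c1 = c2"
proof -
  define T where "T = offset (d mod 2)"
  define P where "P = (\<Sum>i<n. monom (c2 i) i) - (\<Sum>i<n. monom (c1 i) i)"
  define E where "E = red n (P * monom 1 T)"
  have "(\<lambda>x. csum {..<n} (\<lambda>i. csmult (c2 i) (mono n i (d mod 2) (d div 2))) x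
           - csum {..<n} (\<lambda>i. csmult (c1 i) (mono n i (d mod 2) (d div 2))) x)
      = twist d (\<lambda>g. P * of_int (gen_cocycle_inhom g) * monom 1 T)"
    by (simp add: basis_combination_twist T_def P_def twist_diff algebra_simps)
  also have "\<dots> = twist d (\<lambda>g. of_int (gen_cocycle_inhom g) * E)"
  proof (rule twist_red_cong)
    fix g
    have "red n (P * of_int (gen_cocycle_inhom g) * monom 1 T)
        = red n (of_int (gen_cocycle_inhom g) * (P * monom 1 T))"
      by (simp add: ac_simps)
    also have "\<dots> = red n (of_int (gen_cocycle_inhom g) * E)"
      by (simp add: red_of_int_mult E_def red_Acar red_in_Acar n_pos)
    finally show "red n (P * of_int (gen_cocycle_inhom g) * monom 1 T)
        = red n (of_int (gen_cocycle_inhom g) * E)" .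
  qed
  finally have "twist d (\<lambda>g. of_int (gen_cocycle_inhom g) * E) \<in> coboundaries n d"
    using cohom_coboundary_diff[OF h1 h2] by simp
  then have "E = 0"
    using twist_gen_multiple_coboundary_eq_0[OF char, of E d] by (simp add: E_def red_in_Acar n_pos)
  have "P \<in> Acar n"
    unfolding P_def by (intro Acar_diff sum_monom_in_Acar)
  then have "P = red n (E * monom 1 (n - T))"
    unfolding E_def by (rule red_rotate_back[symmetric]) (simp add: T_def offset_def)
  then have "(\<Sum>i<n. monom (c1 i) i) = (\<Sum>i<n. monom (c2 i) i)"
    using \<open>E = 0\<close> by (simp add: P_def)
  then have coeffs: "coeff (\<Sum>i<n. monom (c1 i) i) i = coeff (\<Sum>i<n. monom (c2 i) i) i" for i
    by simp
  show ?thesis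
  proof (rule ext)
    fix i
    show "c1 i = c2 i"
      using coeffs[of i] c1 c2 by (cases "i < n") (simp_all add: coeff_sum_monom_lessThan)
  qed
qed

lemma cocycle_basis:
  assumes "of_nat n = (0 :: 'a::comm_ring_1 poly)" "f \<in> (cocycles n d :: (nat list \<Rightarrow> 'a poly) set)"
  shows "\<exists>!c :: nat \<Rightarrow> 'a. (\<forall>i\<ge>n. c i = 0) \<and>
           cohom n d f (csum {..<n} (\<lambda>i. csmult (c i) (mono n i (d mod 2) (d div 2))))"
proof -
  obtain c0 where "cohom n d f (twist d (\<lambda>g. of_int (gen_cocycle_inhom g) * c0))"
    using cocycle_cohom_gen_multiple[OF assms(2)] by blast
  moreover obtain c :: "nat \<Rightarrow> 'a" where "\<forall>i\<ge>n. c i = 0"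
    "csum {..<n} (\<lambda>i. csmult (c i) (mono n i (d mod 2) (d div 2)))
      = twist d (\<lambda>g. of_int (gen_cocycle_inhom g) * c0)"
    using basis_combination_eq_gen_multiple by blast
  ultimately have c: "(\<forall>i\<ge>n. c i = 0) \<and>
      cohom n d f (csum {..<n} (\<lambda>i. csmult (c i) (mono n i (d mod 2) (d div 2))))"
    by simp
  show ?thesis
  proof (rule ex1I[of _ c])
    fix c' :: "nat \<Rightarrow> 'a"
    assume "(\<forall>i\<ge>n. c' i = 0) \<and>
      cohom n d f (csum {..<n} (\<lambda>i. csmult (c' i) (mono n i (d mod 2) (d div 2))))"
    then show "c' = c"
      using basis_combination_unique[OF assms(1), of c' c d f] c by blast
  qed (rule c)
qed

end

section \<open>The relations\<close>

lemma of_nat_mod_eq: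
  assumes "of_nat n = (0 :: 'b::comm_semiring_1)"
  shows "(of_nat (x mod n) :: 'b) = of_nat x"
proof -
  have "(of_nat x :: 'b) = of_nat (x mod n) + of_nat n * of_nat (x div n)"
    by (metis div_mod_decomp of_nat_add of_nat_mult add.commute mult.commute)
  then show ?thesis
    using assms by simp
qed

lemma choose_2_Suc: "Suc m choose 2 = m + (m choose 2)"
  using binomial_Suc_Suc[of m 1] by (simp add: numeral_2_eq_2)

lemma choose_2_add: "(x + y) choose 2 = (x choose 2) + (y choose 2) + x * y"
  by (induction y) (simp_all add: choose_2_Suc)

context cyclic
begin

lemma gx_cocycle: "gx n \<in> (cocycles n 0 :: (nat list \<Rightarrow> 'a::comm_ring_1 poly) set)"
  unfolding gx_twist by (rule twist_cocycle) (simp add: inhom_d_def)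

lemma gy_cocycle:
  assumes char: "of_nat n = (0 :: 'a::comm_ring_1 poly)"
  shows "gy n \<in> (cocycles n 1 :: (nat list \<Rightarrow> 'a poly) set)"
  unfolding gy_twist
proof (rule twist_cocycle)
  fix g assume "g \<in> idx n (Suc 1)"
  then have "g \<in> idx n 2"
    by (simp add: numeral_2_eq_2)
  then obtain a b where g: "g = [a, b]"
    using idx_2_cases by blast
  have "(of_nat ((a + b) mod n) :: 'a poly) = of_nat a + of_nat b"
    using of_nat_mod_eq[OF char, of "a + b"] by simp
  then show "inhom_d 1 y_inhom g = (0 :: 'a poly)"
    by (simp add: inhom_d_def g y_inhom_def merge_def algebra_simps)
qed

lemma gz_cocycle: "gz n \<in> (cocycles n 2 :: (nat list \<Rightarrow> 'a::comm_ring_1 poly) set)"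
  unfolding gz_twist
proof (rule twist_cocycle)
  fix g assume "g \<in> idx n (Suc 2)"
  then have "g \<in> idx n 3"
    by (simp add: numeral_3_eq_3)
  then obtain a b c where g: "g = [a, b, c]" and abc: "a < n" "b < n" "c < n"
    using idx_3_cases by blast
  have "(of_int (carry b c - carry ((a + b) mod n) c + carry a ((b + c) mod n) - carry a b) ::
      'a poly) = 0"
    by (simp only: carry_cocycle[OF abc]) simp
  then show "inhom_d 2 z_inhom g = (0 :: 'a poly)"
    by (simp add: inhom_d_def g z_inhom_def merge_def numeral_2_eq_2 algebra_simps)
qed

lemma cup_gx_gy_commute:
  "cohom n 1 (cup n 0 1 (gx n) (gy n)) (cup n 1 0 (gy n) (gx n) :: nat list \<Rightarrow> 'a::comm_ring_1 poly)"
proof -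
  have "cup n 0 1 (gx n) (gy n) = (cup n 1 0 (gy n) (gx n) :: nat list \<Rightarrow> 'a poly)"
    unfolding gx_twist gy_twist cup_twist
    by (simp, rule twist_cong) (auto simp: idx_def mult.commute)
  then show ?thesis
    by (simp add: cohom_refl)
qed

lemma cup_gx_gz_commute:
  "cohom n 2 (cup n 0 2 (gx n) (gz n)) (cup n 2 0 (gz n) (gx n) :: nat list \<Rightarrow> 'a::comm_ring_1 poly)"
proof -
  have "cup n 0 2 (gx n) (gz n) = (cup n 2 0 (gz n) (gx n) :: nat list \<Rightarrow> 'a poly)"
    unfolding gx_twist gz_twist cup_twist add_0 add_0_right
    by (rule twist_cong) (auto simp: idx_def mult.commute)
  then show ?thesis
    by (simp add: cohom_refl)
qed

definition yz_homotopy :: "nat list \<Rightarrow> 'a::comm_ring_1 poly" where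
  "yz_homotopy g = - (of_int (carry (g ! 0) (g ! 1)) * of_nat ((g ! 0 + g ! 1) mod n)) *
      monom 1 (n - 1)"

lemma inhom_d_yz_homotopy:
  assumes char: "of_nat n = (0 :: 'a::comm_ring_1 poly)" and abc: "a < n" "b < n" "c < n"
  shows "inhom_d 2 yz_homotopy [a, b, c] = ((of_nat a * of_int (carry b c)
    - of_int (carry a b) * of_nat c) * monom 1 (n - 1) :: 'a poly)"
proof -
  have "carry a ((b + c) mod n) = carry a b - carry b c + carry ((a + b) mod n) c"
    using carry_cocycle[OF abc] by simp
  then have carries: "(of_int (carry a ((b + c) mod n)) :: 'a poly)
      = of_int (carry a b) - of_int (carry b c) + of_int (carry ((a + b) mod n) c)"
    by simp
  have mods: "(of_nat ((a + b) mod n) :: 'a poly) = of_nat a + of_nat b"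
    "(of_nat ((b + c) mod n) :: 'a poly) = of_nat b + of_nat c"
    "(of_nat (((a + b) mod n + c) mod n) :: 'a poly) = of_nat a + of_nat b + of_nat c"
    "(of_nat ((a + (b + c) mod n) mod n) :: 'a poly) = of_nat a + of_nat b + of_nat c"
    by (simp_all add: of_nat_mod_eq[OF char] add.assoc)
  define \<sigma> where "\<sigma> = (monom 1 (n - 1) :: 'a poly)"
  have "inhom_d 2 yz_homotopy [a, b, c] = yz_homotopy [b, c] - yz_homotopy [(a + b) mod n, c]
      + yz_homotopy [a, (b + c) mod n] - (yz_homotopy [a, b] :: 'a poly)"
    by (simp add: inhom_d_def merge_def numeral_2_eq_2)
  also have "\<dots> = - (of_int (carry b c) * (of_nat b + of_nat c)) * \<sigma>
      + (of_int (carry ((a + b) mod n) c) * (of_nat a + of_nat b + of_nat c)) * \<sigma>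
      - (of_int (carry a ((b + c) mod n)) * (of_nat a + of_nat b + of_nat c)) * \<sigma>
      + (of_int (carry a b) * (of_nat a + of_nat b)) * \<sigma>"
    by (simp add: yz_homotopy_def mods \<sigma>_def)
  also have "\<dots> = (of_nat a * of_int (carry b c) - of_int (carry a b) * of_nat c) * \<sigma>"
    unfolding carries by (simp add: algebra_simps)
  finally show ?thesis
    by (simp add: \<sigma>_def)
qed

lemma cup_gy_gz_commute:
  assumes char: "of_nat n = (0 :: 'a::comm_ring_1 poly)"
  shows "cohom n 3 (cup n 1 2 (gy n) (gz n)) (cup n 2 1 (gz n) (gy n) :: nat list \<Rightarrow> 'a poly)"
proof -
  have "y_inhom (take 1 g) * z_inhom (drop 1 g) - z_inhom (take 2 g) * y_inhom (drop 2 g)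
      = (inhom_d 2 yz_homotopy g :: 'a poly)" if g3: "g \<in> idx n 3" for g
  proof -
    obtain a b c where g: "g = [a, b, c]" and abc: "a < n" "b < n" "c < n"
      using idx_3_cases[OF g3] by blast
    have "y_inhom (take 1 g) * z_inhom (drop 1 g) - z_inhom (take 2 g) * y_inhom (drop 2 g)
        = ((of_nat a * of_int (carry b c) - of_int (carry a b) * of_nat c) * monom 1 (n - 1)
            :: 'a poly)"
      by (simp add: g y_inhom_def z_inhom_def algebra_simps)
    then show ?thesis
      by (simp only: g inhom_d_yz_homotopy[OF char abc])
  qed
  note difference = this
  have sums: "(1::nat) + 2 = 3" "(2::nat) + 1 = 3"
    by simp_all
  have "(\<lambda>x. cup n 1 2 (gy n) (gz n) x - cup n 2 1 (gz n) (gy n) x)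
      = (twist 3 (inhom_d 2 yz_homotopy) :: nat list \<Rightarrow> 'a poly)"
    unfolding gy_twist gz_twist cup_twist sums twist_diff by (intro twist_cong difference)
  then show ?thesis
    using twist_coboundary[of 2 yz_homotopy] by (simp add: cohom_def numeral_3_eq_3)
qed

lemma cpow_gx_n: "cohom n 0 (cpow n 0 (gx n) n) (cone :: nat list \<Rightarrow> 'a::comm_ring_1 poly)"
proof -
  have "red n (monom (1::'a) n) = 1"
    by (simp add: red_monom)
  then have "cpow n 0 (gx n) n = (cone :: nat list \<Rightarrow> 'a poly)"
    unfolding cpow_gx cone_twist twist_0 red_one by presburger
  then show ?thesis
    by (simp add: cohom_refl)
qed

text \<open>The coboundary of i |-> (i choose 2) is the cup square (a, b) |-> a b up to (n choose 2)
  times the carry.\<close>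

lemma choose_2_mod:
  assumes char: "of_nat n = (0 :: 'b::comm_ring_1)" and ab: "a < n" "b < n"
  shows "(of_nat ((a + b) mod n choose 2) :: 'b) - of_nat (a choose 2) - of_nat (b choose 2)
       = of_nat a * of_nat b - of_int (carry a b) * of_nat (n choose 2)"
proof (cases "a + b < n")
  case True
  then show ?thesis
    by (simp add: carry_def choose_2_add)
next
  case False
  define s where "s = a + b - n"
  have "a + b = s + n" "(a + b) mod n = s"
    using False ab by (simp_all add: s_def mod_2n)
  moreover have "(s choose 2) + (n choose 2) + s * n = (a choose 2) + (b choose 2) + a * b"
    using choose_2_add[of s n] choose_2_add[of a b] \<open>a + b = s + n\<close> by simp
  then have "(of_nat (s choose 2) :: 'b) + of_nat (n choose 2) + of_nat s * of_nat n
      = of_nat (a choose 2) + of_nat (b choose 2) + of_nat a * of_nat b"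
    by (metis of_nat_add of_nat_mult)
  ultimately show ?thesis
    using False char by (simp add: carry_def algebra_simps)
qed

definition yy_homotopy :: "nat list \<Rightarrow> 'a::comm_ring_1 poly" where
  "yy_homotopy g = - (of_nat (hd g choose 2) * monom 1 (n - 2))"

lemma cpow_gy_2_cohom:
  assumes char: "of_nat n = (0 :: 'a::comm_ring_1 poly)"
  shows "cohom n 2 (cpow n 1 (gy n) 2) (\<lambda>x. of_nat (n choose 2) * mono n (n - 2) 0 1 x :: 'a poly)"
proof -
  define N where "N = (of_nat (n choose 2) :: 'a poly)"
  define Y where "Y g = (of_nat (g ! 0) * of_nat (g ! 1) * monom 1 (n - 2) :: 'a poly)" for g
  define Z where "Z g = (of_int (carry (g ! 0) (g ! 1)) * monom 1 (n - 2) :: 'a poly)" for g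
  have "mono n (n - 2) 0 1 = (twist 2 (\<lambda>g. monom 1 (n - 2) * of_int (gen_cocycle_inhom g)
      * monom 1 (offset 0)) :: nat list \<Rightarrow> 'a poly)"
    using mono_twist[of 0 "n - 2" 1] by (simp add: numeral_2_eq_2)
  also have "\<dots> = twist 2 Z"
  proof (rule twist_cong)
    fix g assume "g \<in> idx n 2"
    moreover obtain a b where "g = [a, b]"
      using \<open>g \<in> idx n 2\<close> idx_2_cases by blast
    ultimately show "monom 1 (n - 2) * of_int (gen_cocycle_inhom g) * monom 1 (offset 0) = Z g"
      using gen_cocycle_inhom_even[of g 2] by (simp add: Z_def offset_def mult.commute)
  qed
  finally have "(\<lambda>x. N * mono n (n - 2) 0 1 x) = twist 2 (\<lambda>g. N * Z g)"
    by (simp add: N_def twist_of_nat_mult)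
  moreover have "cpow n 1 (gy n) 2 = twist 2 Y"
    unfolding cpow_gy_2 Y_def ..
  ultimately have "(\<lambda>x. cpow n 1 (gy n) 2 x - N * mono n (n - 2) 0 1 x)
      = (\<lambda>x. twist 2 Y x - twist 2 (\<lambda>g. N * Z g) x)"
    by (metis (no_types))
  also have "\<dots> = twist 2 (\<lambda>g. Y g - N * Z g)"
    by (rule twist_diff)
  also have "\<dots> = twist (Suc 1) (inhom_d 1 yy_homotopy)"
  proof (simp only: Suc_1, rule twist_cong)
    fix g assume "g \<in> idx n 2"
    then obtain a b where g: "g = [a, b]" "a < n" "b < n"
      using idx_2_cases by blast
    have yy: "inhom_d 1 yy_homotopy g = (of_nat ((a + b) mod n choose 2) - of_nat (a choose 2)
        - of_nat (b choose 2)) * (monom 1 (n - 2) :: 'a poly)"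
      by (simp add: inhom_d_def g yy_homotopy_def merge_def algebra_simps)
    show "Y g - N * Z g = inhom_d 1 yy_homotopy g"
      unfolding yy choose_2_mod[OF char g(2,3)] by (simp add: Y_def Z_def N_def g algebra_simps)
  qed
  finally show ?thesis
    using twist_coboundary[of 1 yy_homotopy] by (simp add: cohom_def N_def numeral_2_eq_2)
qed

end

lemma choose_2_double: "2 * (x choose 2) = x * (x - 1)"
proof (induction x)
  case (Suc m)
  have "2 * (Suc m choose 2) = 2 * m + m * (m - 1)"
    using Suc by (simp add: choose_2_Suc)
  also have "\<dots> = Suc m * (Suc m - 1)"
    by (cases m) (simp_all add: algebra_simps)
  finally show ?case .
qed simp

lemma of_nat_choose_2_eq_0:
  assumes "CHAR('a::comm_ring_1) = p" "prime p" "p \<noteq> 2 \<or> even m"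
  shows "of_nat ((m * p) choose 2) = (0 :: 'a)"
proof -
  have "p dvd (m * p) choose 2"
  proof (cases "p = 2")
    case False
    have "p dvd 2 * ((m * p) choose 2)"
      by (simp add: choose_2_double)
    moreover have "\<not> p dvd 2"
    proof
      assume "p dvd 2"
      then have "p \<le> 2"
        by (simp add: dvd_imp_le)
      then show False
        using False prime_ge_2_nat[OF assms(2)] by simp
    qed
    ultimately show ?thesis
      using assms(2) by (simp add: prime_dvd_mult_iff)
  next
    case True
    then obtain m' where "m = 2 * m'"
      using assms(3) by blast
    then have "(m * p) choose 2 = 2 * (m' * (4 * m' - 1))"
      using True choose_2_double[of "m * p"] by (simp add: algebra_simps)
    then show ?thesis
      using True by simp
  qed
  then show ?thesis
    using assms(1) by (simp add: of_nat_eq_0_iff_char_dvd)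
qed

lemma of_nat_choose_2_eq_1:
  assumes "CHAR('a::comm_ring_1) = 2" "odd m"
  shows "of_nat ((m * 2) choose 2) = (1 :: 'a)"
proof -
  have "2 * ((m * 2) choose 2) = 2 * (m * (2 * m - 1))"
    using choose_2_double[of "m * 2"] by (simp add: algebra_simps)
  moreover have "odd (2 * m - 1)"
    using assms(2) by (cases m) simp_all
  ultimately have "odd ((m * 2) choose 2)"
    using assms(2) by simp
  then obtain q where "(m * 2) choose 2 = 2 * q + 1"
    by (metis oddE)
  moreover have "(of_nat 2 :: 'a) = 0"
    using assms(1) by (simp only: of_nat_eq_0_iff_char_dvd) simp
  ultimately show ?thesis
    by simp
qed

theorem mainTheorem13:
  fixes p m n :: nat
  assumes charp: "CHAR('a::comm_ring_1) = p"
    and primep: "prime p"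
    and m_pos: "m > 0"
    and n_def: "n = m * p"
  shows
    \<comment> \<open>x, y, z are Hochschild cocycles of degrees 0, 1, 2\<close>
    "gx n \<in> (cocycles n 0 :: (nat list \<Rightarrow> 'a poly) set)
     \<and> gy n \<in> (cocycles n 1 :: (nat list \<Rightarrow> 'a poly) set)
     \<and> gz n \<in> (cocycles n 2 :: (nat list \<Rightarrow> 'a poly) set)
     \<comment> \<open>the classes x^i y^(d mod 2) z^(d div 2), i < n, form an R-basis of HH^d(A;A)\<close>
     \<and> (\<forall>d. \<forall>f \<in> (cocycles n d :: (nat list \<Rightarrow> 'a poly) set).
           \<exists>!c :: nat \<Rightarrow> 'a. (\<forall>i\<ge>n. c i = 0) \<and>
              cohom n d f (csum {..<n} (\<lambda>i. csmult (c i) (mono n i (d mod 2) (d div 2)))))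
     \<comment> \<open>the generators commute in HH^*(A;A)\<close>
     \<and> cohom n 1 (cup n 0 1 (gx n) (gy n)) (cup n 1 0 (gy n) (gx n) :: nat list \<Rightarrow> 'a poly)
     \<and> cohom n 2 (cup n 0 2 (gx n) (gz n)) (cup n 2 0 (gz n) (gx n) :: nat list \<Rightarrow> 'a poly)
     \<and> cohom n 3 (cup n 1 2 (gy n) (gz n)) (cup n 2 1 (gz n) (gy n) :: nat list \<Rightarrow> 'a poly)
     \<comment> \<open>relation x^n = 1\<close>
     \<and> cohom n 0 (cpow n 0 (gx n) n) (cone :: nat list \<Rightarrow> 'a poly)
     \<comment> \<open>relation for y^2\<close>
     \<and> ((p \<noteq> 2 \<or> even m) \<longrightarrow>
          cohom n 2 (cpow n 1 (gy n) 2) (\<lambda>_. 0 :: 'a poly))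
     \<and> ((p = 2 \<and> odd m) \<longrightarrow>
          cohom n 2 (cpow n 1 (gy n) 2 :: nat list \<Rightarrow> 'a poly) (mono n (n - 2) 0 1))"
proof -
  have "1 * 2 \<le> m * p"
    using m_pos prime_ge_2_nat[OF primep] by (intro mult_le_mono) auto
  then interpret cyclic n
    by unfold_locales (simp add: n_def)
  have "CHAR('a) dvd n"
    using charp n_def by simp
  then have "(of_nat n :: 'a) = 0"
    by (simp only: of_nat_eq_0_iff_char_dvd)
  then have char: "(of_nat n :: 'a poly) = 0"
    by (simp add: of_nat_poly)
  have "(of_nat (n choose 2) :: 'a poly) = (if p \<noteq> 2 \<or> even m then 0 else 1)"
    using of_nat_choose_2_eq_0[OF charp primep] of_nat_choose_2_eq_1[where 'a = 'a, of
        m] charp n_def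
    by (auto simp: of_nat_poly)
  then have "(p \<noteq> 2 \<or> even m \<longrightarrow> cohom n 2 (cpow n 1 (gy n) 2) (\<lambda>_. 0 :: 'a poly))
    \<and> (p = 2 \<and> odd m \<longrightarrow> cohom n 2 (cpow n 1 (gy n) 2 :: nat list \<Rightarrow> 'a poly) (mono n (n - 2) 0 1))"
    using cpow_gy_2_cohom[OF char] by auto
  then show ?thesis
    by (intro conjI allI ballI cocycle_basis[OF char] gx_cocycle gy_cocycle[OF char] gz_cocycle
        cup_gx_gy_commute cup_gx_gz_commute cup_gy_gz_commute[OF char] cpow_gx_n) auto
qed

end
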